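(* Let $\mathcal{G}=(\mathcal{V},\mathcal{E})$ be a digraph on $n>1$ nodes and fix updating weights $a_{ij}$ and sending weights $b_{ih}$ as described in the context. Then $\mathcal{G}$ is strongly connected if and only if there exists $\bar\epsilon>0$ such that for every $\epsilon\in(0,\bar\epsilon)$ the deterministic algorithm with parameter $\epsilon$ achieves average consensus.
   Context: Setting: $\mathcal{V}=\{1,\dots,n\}$ with $n>1$, $\mathcal{E}\subseteq\mathcal{V}\times\mathcal{V}$, and no selfloops, i.e. $(i,i)\notin\mathcal{E}$. An edge $(j,i)$ means that $j$ sends information to $i$. Write $\mathcal{N}_i^+=\{j:(j,i)\in\mathcal{E}\}$ and $\mathcal{N}_i^-=\{h:(i,h)\in\mathcal{E}\}$. Weights: the updating weights satisfy $a_{ij}\in(0,1)$ if $j\in\mathcal{N}_i^+$, $a_{ij}=0$ otherwise, and $\sum_{j\in\mathcal{N}_i^+}a_{ij}<1$. The sending weights satisfy $b_{ih}\in(0,1)$ if $h\in\mathcal{N}_i^-$, $b_{ih}=0$ otherwise, and $\sum_{h\in\mathcal{N}_i^-}b_{ih}<1$. Matrices: let $A=[a_{ij}]$, $D=\mathrm{diag}(d_1,\dots,d_n)$ with $d_i=\sum_j a_{ij}$, and $L=D-A$. Let $B=[b_{ih}]^T$ (so the $(h,i)$ entry of $B$ is $b_{ih}$), $\tilde D=\mathrm{diag}(\tilde d_1,\dots,\tilde d_n)$ with $\tilde d_i=\sum_h b_{ih}$, and $S=(I-\tilde D)+B$. For a parameter $\epsilon>0$ define $$M=\begin{bmatrix}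 I-L & \epsilon I\\ L & S-\epsilon I\end{bmatrix}\in\mathbb{R}^{2n\times 2n}.$$ Deterministic algorithm: state $x(k)\in\mathbb{R}^n$ and surplus $s(k)\in\mathbb{R}^n$ evolve by $\begin{bmatrix}x(k+1)\\ s(k+1)\end{bmatrix}=M\begin{bmatrix}x(k)\\ s(k)\end{bmatrix}$ for $k\ge 0$, starting from $s(0)=0$. Average consensus: the algorithm achieves average consensus if for every $x(0)\in\mathbb{R}^n$ (with $s(0)=0$) we have $(x(k),s(k))\to(x_a\mathbf{1},0)$ as $k\to\infty$, where $x_a=\mathbf{1}^Tx(0)/n$ and $\mathbf{1}$ is the all-ones vector. *)

theory Defs
  imports "HOL-Analysis.Analysis"
begin

text \<open>Nodes are the elements of a finite type 'n (n = CARD('n)). An edge (j,i) in E means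
 j sends information to i. Weights: a i j = a_ij (updating), b i h = b_ih (sending).\<close>

definition in_nbrs :: "('n \<times> 'n) set \<Rightarrow> 'n \<Rightarrow> 'n set" where
  "in_nbrs E i = {j. (j, i) \<in> E}"

definition out_nbrs :: "('n \<times> 'n) set \<Rightarrow> 'n \<Rightarrow> 'n set" where
  "out_nbrs E i = {h. (i, h) \<in> E}"

definition valid_weights ::
  "('n::finite \<times> 'n) set \<Rightarrow> ('n \<Rightarrow> 'n \<Rightarrow> real) \<Rightarrow> ('n \<Rightarrow> 'n \<Rightarrow> real) \<Rightarrow> bool" where
  "valid_weights E a b \<longleftrightarrow>
     (\<forall>i j. j \<in> in_nbrs E i \<longrightarrow> 0 < a i j \<and> a i j < 1) \<and>
     (\<forall>i j. j \<notin> in_nbrs E i \<longrightarrow> a i j = 0) \<and>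
     (\<forall>i. (\<Sum>j\<in>in_nbrs E i. a i j) < 1) \<and>
     (\<forall>i h. h \<in> out_nbrs E i \<longrightarrow> 0 < b i h \<and> b i h < 1) \<and>
     (\<forall>i h. h \<notin> out_nbrs E i \<longrightarrow> b i h = 0) \<and>
     (\<forall>i. (\<Sum>h\<in>out_nbrs E i. b i h) < 1)"

definition lapl :: "('n::finite \<Rightarrow> 'n \<Rightarrow> real) \<Rightarrow> real^'n^'n" where
  "lapl a = (\<chi> i j. (if i = j then (\<Sum>k\<in>UNIV. a i k) else 0) - a i j)"

definition Smat :: "('n::finite \<Rightarrow> 'n \<Rightarrow> real) \<Rightarrow> real^'n^'n" where
  "Smat b = (\<chi> h i. (if h = i then 1 - (\<Sum>k\<in>UNIV. b i k) else 0) + b i h)"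

text \<open>The 2n x 2n block matrix M, indexed by 'n + 'n (Inl = x-block, Inr = s-block).\<close>
definition Mmat :: "('n::finite \<Rightarrow> 'n \<Rightarrow> real) \<Rightarrow> ('n \<Rightarrow> 'n \<Rightarrow> real) \<Rightarrow> real
    \<Rightarrow> real^('n + 'n)^('n + 'n)" where
  "Mmat a b \<epsilon> = (\<chi> p q. case (p, q) of
      (Inl i, Inl j) \<Rightarrow> (mat 1 - lapl a) $ i $ j
    | (Inl i, Inr j) \<Rightarrow> (\<epsilon> *\<^sub>R (mat 1 :: real^'n^'n)) $ i $ j
    | (Inr i, Inl j) \<Rightarrow> lapl a $ i $ j
    | (Inr i, Inr j) \<Rightarrow> (Smat b - \<epsilon> *\<^sub>R mat 1) $ i $ j)"

definition stack :: "real^'n \<Rightarrow> real^'n \<Rightarrow> real^('n::finite + 'n)" where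
  "stack x s = (\<chi> p. case p of Inl i \<Rightarrow> x $ i | Inr i \<Rightarrow> s $ i)"

primrec traj :: "real^'m^'m \<Rightarrow> real^'m \<Rightarrow> nat \<Rightarrow> real^'m::finite" where
  "traj M z0 0 = z0"
| "traj M z0 (Suc k) = M *v traj M z0 k"

definition average_consensus ::
  "('n::finite \<Rightarrow> 'n \<Rightarrow> real) \<Rightarrow> ('n \<Rightarrow> 'n \<Rightarrow> real) \<Rightarrow> real \<Rightarrow> bool" where
  "average_consensus a b \<epsilon> \<longleftrightarrow>
     (\<forall>x0 :: real^'n.
        traj (Mmat a b \<epsilon>) (stack x0 0) \<longlonglongrightarrow>
          stack (((\<Sum>i\<in>UNIV. x0 $ i) / real CARD('n)) *\<^sub>R 1) 0)"

definition strongly_connected :: "('n \<times> 'n) set \<Rightarrow> bool" where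
  "strongly_connected E \<longleftrightarrow> (\<forall>i j. (i, j) \<in> E\<^sup>*)"

end

theory Submission
  imports Defs
begin

text \<open>Write \<open>P = I - L\<close>; it is row stochastic, while the surplus matrix \<open>S\<close> is column stochastic,
  and the total mass \<open>sum x + sum s\<close> is conserved by the iteration. If the graph is strongly
  connected, some power of \<open>P\<close> and of \<open>S\<close> is entrywise positive, so \<open>P\<close> contracts the oscillation of
  the states and \<open>S\<close> contracts the l1 norm of zero-sum vectors. For \<open>\<epsilon> = 0\<close> the only slow mode
  left is the gap between the \<open>\<pi>\<close>-weighted average of the states (\<open>\<pi>\<close> the stationary distribution of
  \<open>P\<close>) and the conserved average; a perturbation of size \<open>\<epsilon>\<close> makes it decay like \<open>1 - \<epsilon> n \<pi>\<^sup>T w\<close>,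
  with \<open>w\<close> the Perron vector of \<open>S\<close>, while the other couplings are too weak to destroy the
  contractions. A suitable weighted sum of the three quantities therefore decays geometrically for
  small \<open>\<epsilon>\<close>. Conversely, if some node cannot reach a node \<open>j\<close>, the set of nodes that can reach \<open>j\<close>
  receives no information from outside, and the state of \<open>j\<close> cannot converge to the average.\<close>

definition matvec :: "('n::finite \<Rightarrow> 'n \<Rightarrow> real) \<Rightarrow> ('n \<Rightarrow> real) \<Rightarrow> 'n \<Rightarrow> real" where
  "matvec Q x i = (\<Sum>j\<in>UNIV. Q i j * x j)"

primrec mat_power :: "('n::finite \<Rightarrow> 'n \<Rightarrow> real) \<Rightarrow> nat \<Rightarrow> 'n \<Rightarrow> 'n \<Rightarrow> real" where
  "mat_power Q 0 = (\<lambda>i j. if i = j then 1 else 0)"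
| "mat_power Q (Suc k) = (\<lambda>i j. \<Sum>l\<in>UNIV. Q i l * mat_power Q k l j)"

definition row_stochastic :: "('n::finite \<Rightarrow> 'n \<Rightarrow> real) \<Rightarrow> bool" where
  "row_stochastic Q \<longleftrightarrow> (\<forall>i j. 0 \<le> Q i j) \<and> (\<forall>i. (\<Sum>j\<in>UNIV. Q i j) = 1)"

definition col_stochastic :: "('n::finite \<Rightarrow> 'n \<Rightarrow> real) \<Rightarrow> bool" where
  "col_stochastic Q \<longleftrightarrow> (\<forall>i j. 0 \<le> Q i j) \<and> (\<forall>j. (\<Sum>i\<in>UNIV. Q i j) = 1)"

definition prob_vector :: "('n::finite \<Rightarrow> real) \<Rightarrow> bool" where
  "prob_vector v \<longleftrightarrow> (\<forall>i. 0 \<le> v i) \<and> sum v UNIV = 1"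

definition wavg :: "('n::finite \<Rightarrow> real) \<Rightarrow> ('n \<Rightarrow> real) \<Rightarrow> real" where
  "wavg v x = (\<Sum>i\<in>UNIV. v i * x i)"

definition osc :: "('n::finite \<Rightarrow> real) \<Rightarrow> real" where
  "osc x = Max (range x) - Min (range x)"

definition l1_norm :: "('n::finite \<Rightarrow> real) \<Rightarrow> real" where
  "l1_norm x = (\<Sum>i\<in>UNIV. \<bar>x i\<bar>)"

definition orbit_sum :: "('a \<Rightarrow> real) \<Rightarrow> ('a \<Rightarrow> 'a) \<Rightarrow> nat \<Rightarrow> 'a \<Rightarrow> real" where
  "orbit_sum f T K x = (\<Sum>k<K. f ((T ^^ k) x))"

lemma matvec_add: "matvec Q (\<lambda>i. x i + y i) = (\<lambda>i. matvec Q x i + matvec Q y i)"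
  by (rule ext) (simp add: matvec_def distrib_left sum.distrib)

lemma matvec_diff: "matvec Q (\<lambda>i. x i - y i) = (\<lambda>i. matvec Q x i - matvec Q y i)"
  by (rule ext) (simp add: matvec_def right_diff_distrib sum_subtractf)

lemma matvec_scale: "matvec Q (\<lambda>i. c * x i) = (\<lambda>i. c * matvec Q x i)"
  by (rule ext) (simp add: matvec_def sum_distrib_left mult.left_commute)

lemma matvec_mat_power: "matvec (mat_power Q k) = matvec Q ^^ k"
proof (induction k)
  case 0
  show ?case
    by (auto simp: matvec_def fun_eq_iff if_distrib[where f = "\<lambda>t. t * _"] cong: if_cong)
next
  case (Suc k)
  have "matvec (mat_power Q (Suc k)) x = matvec Q (matvec (mat_power Q k) x)" for x
    unfolding matvec_def mat_power.simps sum_distrib_left sum_distrib_right mult.assoc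
    by (rule ext, subst sum.swap) (rule refl)
  then show ?case using Suc.IH by auto
qed

lemma matvec_power_Suc: "matvec (mat_power Q k) (matvec Q x) = matvec (mat_power Q (Suc k)) x"
  by (simp only: matvec_mat_power funpow_Suc_right comp_apply)

lemma mat_power_nonneg: "(\<And>i j. 0 \<le> Q i j) \<Longrightarrow> 0 \<le> mat_power Q k i j"
  by (induction k arbitrary: i j) (auto intro!: sum_nonneg)

lemma matvec_nonneg: "(\<And>i j. 0 \<le> Q i j) \<Longrightarrow> (\<And>j. 0 \<le> x j) \<Longrightarrow> 0 \<le> matvec Q x i"
  by (auto simp: matvec_def intro!: sum_nonneg)

lemma tendsto_matvec:
  "(\<And>j. (\<lambda>k. f k j) \<longlonglongrightarrow> x j) \<Longrightarrow> (\<lambda>k. matvec Q (f k) i) \<longlonglongrightarrow> matvec Q x i"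
  unfolding matvec_def by (intro tendsto_intros)

lemma matvec_eq_zeroI: "(\<And>j. Q i j \<noteq> 0 \<Longrightarrow> y j = 0) \<Longrightarrow> matvec Q y i = 0"
  unfolding matvec_def by (rule sum.neutral) (metis mult_eq_0_iff)

lemma le_Max_range: "x i \<le> Max (range (x :: 'n::finite \<Rightarrow> real))"
  by (rule Max_ge) auto

lemma Min_range_le: "Min (range (x :: 'n::finite \<Rightarrow> real)) \<le> x i"
  by (rule Min_le) auto

lemma diff_le_osc: "x i - x i' \<le> osc x"
  unfolding osc_def using le_Max_range[of x i] Min_range_le[of x i'] by linarith

lemma osc_leI:
  assumes "\<And>i i'. x i - x i' \<le> B"
  shows "osc x \<le> B"
proof -
  have "Max (range x) \<in> range x" "Min (range x) \<in> range x"
    by (simp_all add: Max_in Min_in)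
  then obtain i i' where "Max (range x) = x i" "Min (range x) = x i'"
    by blast
  then show ?thesis unfolding osc_def using assms by simp
qed

lemma osc_nonneg: "0 \<le> osc x"
  using diff_le_osc[of x undefined undefined] by simp

lemma osc_add: "osc (\<lambda>i. x i + y i) \<le> osc x + osc y"
proof (rule osc_leI)
  fix i i'
  show "x i + y i - (x i' + y i') \<le> osc x + osc y"
    using diff_le_osc[of x i i'] diff_le_osc[of y i i'] by linarith
qed

lemma osc_scale_le: "osc (\<lambda>i. c * x i) \<le> \<bar>c\<bar> * osc x"
proof (rule osc_leI)
  fix i i'
  have "c * x i - c * x i' \<le> \<bar>c\<bar> * \<bar>x i - x i'\<bar>"
    by (metis abs_ge_self abs_mult right_diff_distrib)
  also have "\<bar>x i - x i'\<bar> \<le> osc x"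
    using diff_le_osc[of x i i'] diff_le_osc[of x i' i] by linarith
  finally show "c * x i - c * x i' \<le> \<bar>c\<bar> * osc x"
    by (simp add: mult_left_mono)
qed

lemma osc_add_const: "osc (\<lambda>i. x i + c) = osc x"
  by (intro antisym osc_leI) (use diff_le_osc[of x] diff_le_osc[of "\<lambda>i. x i + c"] in auto)

lemma abs_le_l1_norm: "\<bar>x i\<bar> \<le> l1_norm x"
  unfolding l1_norm_def by (rule member_le_sum) auto

lemma l1_norm_nonneg: "0 \<le> l1_norm x"
  unfolding l1_norm_def by (simp add: sum_nonneg)

lemma l1_norm_add: "l1_norm (\<lambda>i. x i + y i) \<le> l1_norm x + l1_norm y"
  unfolding l1_norm_def sum.distrib[symmetric] by (rule sum_mono) (rule abs_triangle_ineq)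

lemma l1_norm_diff: "l1_norm (\<lambda>i. x i - y i) \<le> l1_norm x + l1_norm y"
  unfolding l1_norm_def sum.distrib[symmetric] by (rule sum_mono) (rule abs_triangle_ineq4)

lemma l1_norm_scale: "l1_norm (\<lambda>i. c * x i) = \<bar>c\<bar> * l1_norm x"
  unfolding l1_norm_def by (simp add: abs_mult sum_distrib_left)

lemma abs_sum_le_l1_norm: "\<bar>sum x UNIV\<bar> \<le> l1_norm x"
  unfolding l1_norm_def by (rule sum_abs)

lemma osc_le_l1_norm: "osc x \<le> 2 * l1_norm x"
proof (rule osc_leI)
  fix i i'
  show "x i - x i' \<le> 2 * l1_norm x"
    using abs_le_l1_norm[of x i] abs_le_l1_norm[of x i'] by linarith
qed

lemma l1_norm_prob_vector: "prob_vector v \<Longrightarrow> l1_norm v = 1"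
  by (simp add: prob_vector_def l1_norm_def)

lemma wavg_bounds:
  assumes "prob_vector v"
  shows "Min (range x) \<le> wavg v x" "wavg v x \<le> Max (range x)"
  unfolding wavg_def
proof -
  have "(\<Sum>i\<in>UNIV. v i * Min (range x)) \<le> (\<Sum>i\<in>UNIV. v i * x i)"
    using assms by (intro sum_mono mult_left_mono Min_range_le) (auto simp: prob_vector_def)
  then show "Min (range x) \<le> (\<Sum>i\<in>UNIV. v i * x i)"
    using assms by (simp add: prob_vector_def sum_distrib_right[symmetric])
  have "(\<Sum>i\<in>UNIV. v i * x i) \<le> (\<Sum>i\<in>UNIV. v i * Max (range x))"
    using assms by (intro sum_mono mult_left_mono le_Max_range) (auto simp: prob_vector_def)
  then show "(\<Sum>i\<in>UNIV. v i * x i) \<le> Max (range x)"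
    using assms by (simp add: prob_vector_def sum_distrib_right[symmetric])
qed

lemma abs_wavg_le_l1_norm:
  assumes "prob_vector v"
  shows "\<bar>wavg v x\<bar> \<le> l1_norm x"
  unfolding wavg_def
proof -
  have "v i \<le> 1" for i
    using assms member_le_sum[of i UNIV v] by (auto simp: prob_vector_def)
  then have "\<bar>v i * x i\<bar> \<le> \<bar>x i\<bar>" for i
    using assms by (simp add: abs_mult prob_vector_def mult_left_le_one_le)
  then have "(\<Sum>i\<in>UNIV. \<bar>v i * x i\<bar>) \<le> l1_norm x"
    unfolding l1_norm_def by (simp add: sum_mono)
  then show "\<bar>\<Sum>i\<in>UNIV. v i * x i\<bar> \<le> l1_norm x"
    using sum_abs[of "\<lambda>i. v i * x i" UNIV] by linarith
qed

lemma abs_le_osc_if_wavg_zero: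
  assumes "prob_vector v" "wavg v x = 0"
  shows "\<bar>x i\<bar> \<le> osc x"
  using wavg_bounds[OF assms(1), of x] assms(2) le_Max_range[of x i] Min_range_le[of x i]
  unfolding osc_def by linarith

lemma row_stochasticD:
  "row_stochastic Q \<Longrightarrow> 0 \<le> Q i j" "row_stochastic Q \<Longrightarrow> (\<Sum>j\<in>UNIV. Q i j) = 1"
  by (simp_all add: row_stochastic_def)

lemma row_stochastic_matvec_bounds:
  assumes "row_stochastic Q"
  shows "Min (range x) \<le> matvec Q x i" "matvec Q x i \<le> Max (range x)"
  using wavg_bounds[of "Q i" x] assms
  by (simp_all add: prob_vector_def row_stochastic_def matvec_def wavg_def)

lemma osc_matvec_le:
  assumes "row_stochastic Q"
  shows "osc (matvec Q x) \<le> osc x"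
proof (rule osc_leI)
  fix i i'
  show "matvec Q x i - matvec Q x i' \<le> osc x"
    using row_stochastic_matvec_bounds[OF assms, of x i] row_stochastic_matvec_bounds[OF assms, of x i']
    unfolding osc_def by linarith
qed

lemma matvec_const: "row_stochastic Q \<Longrightarrow> matvec Q (\<lambda>_. c) = (\<lambda>_. c)"
  by (rule ext) (simp add: matvec_def sum_distrib_right[symmetric] row_stochasticD)

lemma row_stochastic_mat_power: "row_stochastic Q \<Longrightarrow> row_stochastic (mat_power Q k)"
proof (induction k)
  case (Suc k)
  have "(\<Sum>j\<in>UNIV. \<Sum>l\<in>UNIV. Q i l * mat_power Q k l j) = 1" for i
    using Suc by (subst sum.swap) (simp add: sum_distrib_left[symmetric] row_stochastic_def)
  then show ?case
    using Suc by (auto simp: row_stochastic_def intro!: sum_nonneg mat_power_nonneg)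
qed (auto simp: row_stochastic_def)

lemma abs_diff_matvec_le_osc: "row_stochastic Q \<Longrightarrow> \<bar>x i - matvec Q x i\<bar> \<le> osc x"
  using row_stochastic_matvec_bounds[of Q x i] le_Max_range[of x i] Min_range_le[of x i]
  unfolding osc_def by linarith

text \<open>Split off the uniform part \<open>\<eta>\<close> of each row; it maps every vector to a constant.\<close>

lemma osc_matvec_scrambling:
  assumes G: "row_stochastic G" and ge: "\<And>i j. \<eta> \<le> G i j"
  shows "osc (matvec G x) \<le> (1 - real CARD('n) * \<eta>) * osc (x :: 'n::finite \<Rightarrow> real)"
proof -
  let ?c = "1 - real CARD('n) * \<eta>" and ?M = "Max (range x)" and ?m = "Min (range x)"
  have split: "matvec G x i = (\<Sum>j\<in>UNIV. (G i j - \<eta>) * x j) + \<eta> * sum x UNIV" for i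
    by (simp add: matvec_def left_diff_distrib sum_subtractf sum_distrib_left)
  have rest: "(\<Sum>j\<in>UNIV. (G i j - \<eta>) * c) = ?c * c" for i c
    using row_stochasticD(2)[OF G, of i] by (simp add: sum_distrib_right[symmetric] sum_subtractf)
  have "(\<Sum>j\<in>UNIV. (G i j - \<eta>) * x j) \<le> ?c * ?M" for i
    using sum_mono[of UNIV "\<lambda>j. (G i j - \<eta>) * x j" "\<lambda>j. (G i j - \<eta>) * ?M"] ge
    by (simp add: mult_left_mono le_Max_range rest)
  moreover have "?c * ?m \<le> (\<Sum>j\<in>UNIV. (G i j - \<eta>) * x j)" for i
    using sum_mono[of UNIV "\<lambda>j. (G i j - \<eta>) * ?m" "\<lambda>j. (G i j - \<eta>) * x j"] ge
    by (simp add: mult_left_mono Min_range_le rest)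
  ultimately show ?thesis
    by (intro osc_leI) (simp add: split osc_def right_diff_distrib add_mono diff_mono)
qed

lemma col_stochasticD:
  "col_stochastic Q \<Longrightarrow> 0 \<le> Q i j" "col_stochastic Q \<Longrightarrow> (\<Sum>i\<in>UNIV. Q i j) = 1"
  by (simp_all add: col_stochastic_def)

lemma col_stochastic_transpose: "col_stochastic (\<lambda>i j. Q j i) \<longleftrightarrow> row_stochastic Q"
  unfolding col_stochastic_def row_stochastic_def by blast

lemma sum_matvec: "col_stochastic Q \<Longrightarrow> sum (matvec Q x) UNIV = sum x UNIV"
  unfolding matvec_def by (subst sum.swap) (simp add: sum_distrib_right[symmetric] col_stochasticD)

lemma l1_norm_matvec_le: "col_stochastic Q \<Longrightarrow> l1_norm (matvec Q x) \<le> l1_norm x"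
proof -
  assume Q: "col_stochastic Q"
  have "l1_norm (matvec Q x) \<le> (\<Sum>i\<in>UNIV. \<Sum>j\<in>UNIV. Q i j * \<bar>x j\<bar>)"
    unfolding l1_norm_def matvec_def
    by (rule sum_mono, rule order_trans[OF sum_abs]) (simp add: abs_mult col_stochasticD[OF Q])
  also have "\<dots> = l1_norm x"
    by (subst sum.swap) (simp add: l1_norm_def sum_distrib_right[symmetric] col_stochasticD[OF Q])
  finally show ?thesis .
qed

lemma col_stochastic_mat_power: "col_stochastic Q \<Longrightarrow> col_stochastic (mat_power Q k)"
proof (induction k)
  case (Suc k)
  have "(\<Sum>i\<in>UNIV. \<Sum>l\<in>UNIV. Q i l * mat_power Q k l j) = 1" for j
    using Suc by (subst sum.swap) (simp add: sum_distrib_right[symmetric] col_stochastic_def)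
  then show ?case
    using Suc by (auto simp: col_stochastic_def intro!: sum_nonneg mat_power_nonneg)
qed (auto simp: col_stochastic_def)

text \<open>Dually, on vectors of zero sum the uniform part \<open>\<eta>\<close> of each column contributes nothing.\<close>

lemma l1_norm_matvec_scrambling:
  assumes G: "col_stochastic G" and ge: "\<And>i j. \<eta> \<le> G i j" and zero: "sum y UNIV = 0"
  shows "l1_norm (matvec G y) \<le> (1 - real CARD('n) * \<eta>) * l1_norm (y :: 'n::finite \<Rightarrow> real)"
proof -
  have "matvec G y i = (\<Sum>j\<in>UNIV. (G i j - \<eta>) * y j)" for i
    using zero by (simp add: matvec_def left_diff_distrib sum_subtractf sum_distrib_left[symmetric])
  then have "\<bar>matvec G y i\<bar> \<le> (\<Sum>j\<in>UNIV. (G i j - \<eta>) * \<bar>y j\<bar>)" for i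
    using ge by (auto intro!: order_trans[OF sum_abs] simp: abs_mult)
  then have "l1_norm (matvec G y) \<le> (\<Sum>i\<in>UNIV. \<Sum>j\<in>UNIV. (G i j - \<eta>) * \<bar>y j\<bar>)"
    unfolding l1_norm_def by (rule sum_mono)
  also have "\<dots> = (1 - real CARD('n) * \<eta>) * l1_norm y"
    by (subst sum.swap)
      (simp add: l1_norm_def sum_distrib_right[symmetric] sum_distrib_left sum_subtractf col_stochasticD[OF G])
  finally show ?thesis .
qed

lemma card_mult_entry_bound_le_one:
  fixes G :: "'n::finite \<Rightarrow> 'n \<Rightarrow> real"
  assumes "row_stochastic G \<or> col_stochastic G" and "\<And>i j. \<eta> \<le> G i j"
  shows "real CARD('n) * \<eta> \<le> 1"
proof -
  have "(\<Sum>j::'n\<in>UNIV. \<eta>) \<le> 1"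
    using assms(1)
  proof
    assume "row_stochastic G"
    have "(\<Sum>j::'n\<in>UNIV. \<eta>) \<le> (\<Sum>j\<in>UNIV. G undefined j)"
      by (rule sum_mono) (rule assms(2))
    then show ?thesis using row_stochasticD(2)[OF \<open>row_stochastic G\<close>] by simp
  next
    assume "col_stochastic G"
    have "(\<Sum>i::'n\<in>UNIV. \<eta>) \<le> (\<Sum>i\<in>UNIV. G i undefined)"
      by (rule sum_mono) (rule assms(2))
    then show ?thesis using col_stochasticD(2)[OF \<open>col_stochastic G\<close>] by simp
  qed
  then show ?thesis by simp
qed

lemma contraction_rate_bounds:
  fixes G :: "'n::finite \<Rightarrow> 'n \<Rightarrow> real" and K :: nat
  assumes "row_stochastic G \<or> col_stochastic G" "\<And>i j. \<eta> \<le> G i j" "0 < \<eta>" "0 < K"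
  shows "0 \<le> 1 - real CARD('n) * \<eta> / K" "1 - real CARD('n) * \<eta> / K < 1"
proof -
  have "real CARD('n) * \<eta> \<le> real K"
    using card_mult_entry_bound_le_one[OF assms(1,2)] \<open>0 < K\<close> by linarith
  then show "0 \<le> 1 - real CARD('n) * \<eta> / K"
    using \<open>0 < K\<close> by (simp add: field_simps)
  show "1 - real CARD('n) * \<eta> / K < 1"
    using \<open>0 < \<eta>\<close> \<open>0 < K\<close> by simp
qed

subsection \<open>Positive powers on strongly connected graphs\<close>

lemma mat_power_Suc_ge:
  assumes nonneg: "\<And>i j. 0 \<le> Q i j" and "0 \<le> \<delta>" "\<delta> \<le> Q i l" "\<delta> ^ k \<le> mat_power Q k l j"
  shows "\<delta> ^ Suc k \<le> mat_power Q (Suc k) i j"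
proof -
  have "\<delta> * \<delta> ^ k \<le> Q i l * mat_power Q k l j"
    using assms by (intro mult_mono) auto
  also have "\<dots> \<le> (\<Sum>l\<in>UNIV. Q i l * mat_power Q k l j)"
    by (rule member_le_sum) (auto intro: mult_nonneg_nonneg nonneg mat_power_nonneg)
  finally show ?thesis by simp
qed

lemma eventually_mat_power_ge:
  assumes nonneg: "\<And>i j. 0 \<le> Q i j" and "0 \<le> \<delta>" and diag: "\<And>i. \<delta> \<le> Q i i"
    and edge: "\<And>i l. (l, i) \<in> R \<Longrightarrow> \<delta> \<le> Q i l" and "(j, i) \<in> R\<^sup>*"
  shows "eventually (\<lambda>k. \<delta> ^ k \<le> mat_power Q k i j) sequentially"
  using \<open>(j, i) \<in> R\<^sup>*\<close>
proof (induction rule: rtrancl_induct)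
  case base
  have "\<delta> ^ k \<le> mat_power Q k j j" for k
  proof (induction k)
    case (Suc k)
    show ?case by (rule mat_power_Suc_ge[OF nonneg \<open>0 \<le> \<delta>\<close> diag Suc.IH])
  qed simp
  then show ?case by simp
next
  case (step l i)
  then obtain k0 where k0: "\<And>k. k0 \<le> k \<Longrightarrow> \<delta> ^ k \<le> mat_power Q k l j"
    by (auto simp: eventually_sequentially)
  have bound: "\<delta> ^ Suc k \<le> mat_power Q (Suc k) i j" if "k0 \<le> k" for k
    by (rule mat_power_Suc_ge[OF nonneg \<open>0 \<le> \<delta>\<close> edge[OF step.hyps(2)] k0[OF that]])
  show ?case
    unfolding eventually_sequentially
  proof (intro exI allI impI)
    fix m
    assume "Suc k0 \<le> m"
    then obtain k where "m = Suc k" "k0 \<le> k"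
      by (auto dest: Suc_le_D)
    then show "\<delta> ^ m \<le> mat_power Q m i j"
      using bound by blast
  qed
qed

lemma mat_power_uniformly_positive:
  fixes Q :: "'n::finite \<Rightarrow> 'n \<Rightarrow> real"
  assumes nonneg: "\<And>i j. 0 \<le> Q i j" and "0 < \<delta>" and diag: "\<And>i. \<delta> \<le> Q i i"
    and edge: "\<And>i l. (l, i) \<in> R \<Longrightarrow> \<delta> \<le> Q i l" and conn: "\<And>i j. (j, i) \<in> R\<^sup>*"
  shows "\<exists>K \<eta>. 0 < K \<and> 0 < \<eta> \<and> (\<forall>i j. \<eta> \<le> mat_power Q K i j)"
proof -
  have "eventually (\<lambda>k. \<delta> ^ k \<le> mat_power Q k i j) sequentially" for i j
    by (rule eventually_mat_power_ge[where R = R]) (use nonneg diag edge conn \<open>0 < \<delta>\<close> in auto)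
  then have "eventually (\<lambda>k. \<forall>i j. \<delta> ^ k \<le> mat_power Q k i j) sequentially"
    by (intro eventually_all_finite)
  then obtain k0 where k0: "\<And>k. k0 \<le> k \<Longrightarrow> \<forall>i j. \<delta> ^ k \<le> mat_power Q k i j"
    by (auto simp: eventually_sequentially)
  have "\<forall>i j. \<delta> ^ Suc k0 \<le> mat_power Q (Suc k0) i j"
    by (rule k0) simp
  then show ?thesis
    using \<open>0 < \<delta>\<close> by (intro exI[of _ "Suc k0"] exI[of _ "\<delta> ^ Suc k0"]) simp
qed

text \<open>Summing a nonincreasing measure over a window of length \<open>K\<close> turns a contraction that only
  shows up after \<open>K\<close> steps into a contraction of every single step.\<close>

lemma orbit_sum_contraction:
  assumes mono: "\<And>k. f ((T ^^ k) x) \<le> f x" and contr: "f ((T ^^ K) x) \<le> (1 - c) * f x"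
    and "0 < K" "0 \<le> c"
  shows "orbit_sum f T K (T x) \<le> (1 - c / K) * orbit_sum f T K x"
proof -
  have shift: "orbit_sum f T K (T x) = orbit_sum f T K x - f x + f ((T ^^ K) x)"
    unfolding orbit_sum_def funpow_Suc_right[symmetric, unfolded o_def]
    using sum.lessThan_Suc_shift[of "\<lambda>k. f ((T ^^ k) x)" K] by (simp add: funpow_swap1)
  have "orbit_sum f T K x \<le> K * f x"
    unfolding orbit_sum_def using sum_mono[of "{..<K}", OF mono] by simp
  then have "c * (orbit_sum f T K x / K) \<le> c * f x"
    using \<open>0 < K\<close> \<open>0 \<le> c\<close> by (intro mult_left_mono) (simp_all add: field_simps)
  then show ?thesis
    using shift contr by (simp add: algebra_simps)
qed

lemma orbit_sum_nonneg: "(\<And>x. 0 \<le> f x) \<Longrightarrow> 0 \<le> orbit_sum f T K x"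
  by (simp add: orbit_sum_def sum_nonneg)

lemma le_orbit_sum: "(\<And>x. 0 \<le> f x) \<Longrightarrow> 0 < K \<Longrightarrow> f x \<le> orbit_sum f T K x"
  unfolding orbit_sum_def using member_le_sum[of 0 "{..<K}" "\<lambda>k. f ((T ^^ k) x)"] by simp

lemma orbit_sum_le: "(\<And>k. f ((T ^^ k) x) \<le> f x) \<Longrightarrow> orbit_sum f T K x \<le> K * f x"
  unfolding orbit_sum_def using sum_mono[of "{..<K}" "\<lambda>k. f ((T ^^ k) x)" "\<lambda>_. f x"] by simp

lemma orbit_sum_matvec_add:
  assumes "\<And>x y. f (\<lambda>i. x i + y i) \<le> f x + f y"
  shows "orbit_sum f (matvec Q) K (\<lambda>i. x i + y i) \<le> orbit_sum f (matvec Q) K x + orbit_sum f (matvec Q) K y"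
  unfolding orbit_sum_def matvec_mat_power[symmetric] matvec_add sum.distrib[symmetric]
  by (rule sum_mono) (rule assms)

lemma orbit_sum_matvec_scale:
  assumes "\<And>x. f (\<lambda>i. c * x i) \<le> \<bar>c\<bar> * f x"
  shows "orbit_sum f (matvec Q) K (\<lambda>i. c * x i) \<le> \<bar>c\<bar> * orbit_sum f (matvec Q) K x"
  unfolding orbit_sum_def matvec_mat_power[symmetric] matvec_scale sum_distrib_left
  by (rule sum_mono) (rule assms)

lemma osc_matvec_power_le: "row_stochastic Q \<Longrightarrow> osc ((matvec Q ^^ k) x) \<le> osc x"
  unfolding matvec_mat_power[symmetric] by (intro osc_matvec_le row_stochastic_mat_power)

lemma l1_norm_matvec_power_le: "col_stochastic Q \<Longrightarrow> l1_norm ((matvec Q ^^ k) x) \<le> l1_norm x"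
  unfolding matvec_mat_power[symmetric] by (intro l1_norm_matvec_le col_stochastic_mat_power)

lemma sum_matvec_power: "col_stochastic Q \<Longrightarrow> sum ((matvec Q ^^ k) x) UNIV = sum x UNIV"
  unfolding matvec_mat_power[symmetric] by (intro sum_matvec col_stochastic_mat_power)

lemma osc_orbit_sum_contraction:
  assumes "row_stochastic Q" "0 < K" "0 < \<eta>" "\<And>i j. \<eta> \<le> mat_power Q K i j"
  shows "orbit_sum osc (matvec Q) K (matvec Q x)
           \<le> (1 - real CARD('n) * \<eta> / K) * orbit_sum osc (matvec Q) K (x :: 'n::finite \<Rightarrow> real)"
proof (rule orbit_sum_contraction)
  show "osc ((matvec Q ^^ K) x) \<le> (1 - real CARD('n) * \<eta>) * osc x"
    unfolding matvec_mat_power[symmetric]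
    by (rule osc_matvec_scrambling[OF row_stochastic_mat_power]) (use assms in auto)
qed (use assms in \<open>auto simp: osc_matvec_power_le\<close>)

lemma l1_orbit_sum_contraction:
  assumes "col_stochastic Q" "0 < K" "0 < \<eta>" "\<And>i j. \<eta> \<le> mat_power Q K i j"
    and "sum y UNIV = 0"
  shows "orbit_sum l1_norm (matvec Q) K (matvec Q y)
           \<le> (1 - real CARD('n) * \<eta> / K) * orbit_sum l1_norm (matvec Q) K (y :: 'n::finite \<Rightarrow> real)"
proof (rule orbit_sum_contraction)
  show "l1_norm ((matvec Q ^^ K) y) \<le> (1 - real CARD('n) * \<eta>) * l1_norm y"
    unfolding matvec_mat_power[symmetric]
    by (rule l1_norm_matvec_scrambling[OF col_stochastic_mat_power]) (use assms in auto)
qed (use assms in \<open>auto simp: l1_norm_matvec_power_le\<close>)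

lemma convergent_if_geometric_increments:
  fixes u :: "nat \<Rightarrow> real"
  assumes "\<And>k. \<bar>u (Suc k) - u k\<bar> \<le> C * q ^ k" and "0 \<le> q" "q < 1"
  shows "convergent u"
proof -
  have "summable (\<lambda>k. C * q ^ k)"
    using assms(2,3) by (intro summable_mult summable_geometric) simp
  then have "summable (\<lambda>k. u (Suc k) - u k)"
    by (rule summable_comparison_test'[where N = 0]) (use assms(1) in simp)
  then have "convergent (\<lambda>n. u n - u 0)"
    by (simp add: summable_iff_convergent sum_lessThan_telescope)
  from convergent_add[OF this convergent_const[of "u 0"]] show ?thesis
    by simp
qed

lemma zero_sum_l1_norm_decay:
  fixes Q :: "'n::finite \<Rightarrow> 'n \<Rightarrow> real"
  assumes Q: "col_stochastic Q" and "0 < K" "0 < \<eta>" and ge: "\<And>i j. \<eta> \<le> mat_power Q K i j"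
    and zero: "sum y UNIV = 0"
  shows "l1_norm ((matvec Q ^^ k) y) \<le> (1 - real CARD('n) * \<eta> / K) ^ k * (K * l1_norm y)"
proof -
  let ?q = "1 - real CARD('n) * \<eta> / K" and ?L = "orbit_sum l1_norm (matvec Q) K"
  have q: "0 \<le> ?q"
    by (rule contraction_rate_bounds(1)[OF disjI2[OF col_stochastic_mat_power[OF Q]] ge \<open>0 < \<eta>\<close> \<open>0 < K\<close>])
  have "?L ((matvec Q ^^ k) y) \<le> ?q ^ k * ?L y"
  proof (induction k)
    case (Suc k)
    have "?L ((matvec Q ^^ Suc k) y) \<le> ?q * ?L ((matvec Q ^^ k) y)"
      using l1_orbit_sum_contraction[OF Q \<open>0 < K\<close> \<open>0 < \<eta>\<close> ge] zero sum_matvec_power[OF Q] by simp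
    also have "\<dots> \<le> ?q * (?q ^ k * ?L y)"
      using Suc.IH q by (rule mult_left_mono)
    finally show ?case by simp
  qed simp
  moreover have "l1_norm ((matvec Q ^^ k) y) \<le> ?L ((matvec Q ^^ k) y)"
    by (rule le_orbit_sum[OF l1_norm_nonneg \<open>0 < K\<close>])
  moreover have "?L y \<le> K * l1_norm y"
    by (rule orbit_sum_le) (rule l1_norm_matvec_power_le[OF Q])
  ultimately show ?thesis
    using mult_left_mono[of "?L y" "K * l1_norm y" "?q ^ k"] q by simp
qed

text \<open>The fixed vector is the limit of the iterates of the uniform distribution: consecutive
  iterates differ by iterates of a zero-sum vector, which decay geometrically.\<close>

lemma col_stochastic_fixed_vector:
  fixes Q :: "'n::finite \<Rightarrow> 'n \<Rightarrow> real"
  assumes Q: "col_stochastic Q" and "0 < K" "0 < \<eta>" and ge: "\<And>i j. \<eta> \<le> mat_power Q K i j"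
  shows "\<exists>p. prob_vector p \<and> (\<forall>i. \<eta> \<le> p i) \<and> matvec Q p = p"
proof -
  define y :: "'n \<Rightarrow> real" where "y = (\<lambda>_. 1 / real CARD('n))"
  define d where "d = (\<lambda>i. matvec Q y i - y i)"
  define q where "q = 1 - real CARD('n) * \<eta> / K"
  have q: "0 \<le> q" "q < 1"
    unfolding q_def
    by (rule contraction_rate_bounds[OF disjI2[OF col_stochastic_mat_power[OF Q]] ge \<open>0 < \<eta>\<close> \<open>0 < K\<close>])+
  have "sum d UNIV = 0"
    unfolding d_def by (simp add: sum_subtractf sum_matvec[OF Q])
  then have decay: "l1_norm ((matvec Q ^^ k) d) \<le> q ^ k * (K * l1_norm d)" for k
    unfolding q_def by (rule zero_sum_l1_norm_decay[OF Q \<open>0 < K\<close> \<open>0 < \<eta>\<close> ge])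
  have incr: "(matvec Q ^^ Suc k) y i - (matvec Q ^^ k) y i = (matvec Q ^^ k) d i" for k i
    by (simp add: d_def matvec_diff matvec_power_Suc del: funpow.simps flip: matvec_mat_power)
  have conv: "convergent (\<lambda>k. (matvec Q ^^ k) y i)" for i
  proof (rule convergent_if_geometric_increments[OF _ q])
    show "\<bar>(matvec Q ^^ Suc k) y i - (matvec Q ^^ k) y i\<bar> \<le> (K * l1_norm d) * q ^ k" for k
      unfolding incr using abs_le_l1_norm[of "(matvec Q ^^ k) d" i] decay[of k] by (simp add: mult_ac)
  qed
  define p where "p i = lim (\<lambda>k. (matvec Q ^^ k) y i)" for i
  have lim: "(\<lambda>k. (matvec Q ^^ k) y i) \<longlonglongrightarrow> p i" for i
    unfolding p_def using conv convergent_LIMSEQ_iff by blast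
  have fixed: "matvec Q p = p"
  proof
    fix i
    have "(\<lambda>k. matvec Q ((matvec Q ^^ k) y) i) \<longlonglongrightarrow> matvec Q p i"
      by (intro tendsto_matvec lim)
    moreover have "(\<lambda>k. matvec Q ((matvec Q ^^ k) y) i) \<longlonglongrightarrow> p i"
      using LIMSEQ_Suc[OF lim[of i]] by simp
    ultimately show "matvec Q p i = p i"
      by (rule LIMSEQ_unique)
  qed
  have "(\<lambda>k. \<Sum>i\<in>UNIV. (matvec Q ^^ k) y i) \<longlonglongrightarrow> sum p UNIV"
    by (intro tendsto_intros lim)
  moreover have "(\<Sum>i\<in>UNIV. (matvec Q ^^ k) y i) = 1" for k
    using sum_matvec_power[OF Q] by (simp add: y_def)
  ultimately have sum_p: "sum p UNIV = 1"
    by (simp add: LIMSEQ_const_iff)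
  have nonneg: "0 \<le> p i" for i
  proof (rule LIMSEQ_le_const[OF lim])
    have "0 \<le> matvec (mat_power Q k) y i" for k
      by (intro matvec_nonneg mat_power_nonneg col_stochasticD(1)[OF Q]) (simp add: y_def)
    then show "\<exists>N. \<forall>k\<ge>N. 0 \<le> (matvec Q ^^ k) y i"
      by (simp add: matvec_mat_power)
  qed
  have lower: "\<eta> \<le> p i" for i
  proof -
    have "(matvec Q ^^ m) p = p" for m
      by (induction m) (simp_all add: fixed)
    then have "p i = (\<Sum>j\<in>UNIV. mat_power Q K i j * p j)"
      by (metis matvec_def matvec_mat_power)
    moreover have "(\<Sum>j\<in>UNIV. \<eta> * p j) \<le> (\<Sum>j\<in>UNIV. mat_power Q K i j * p j)"
      using nonneg by (intro sum_mono mult_right_mono ge)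
    ultimately show ?thesis
      using sum_p by (simp add: sum_distrib_left[symmetric])
  qed
  show ?thesis
    using nonneg lower sum_p fixed by (auto simp: prob_vector_def)
qed

subsection \<open>The perturbed iteration\<close>

definition center :: "('n::finite \<Rightarrow> real) \<Rightarrow> ('n \<Rightarrow> real) \<Rightarrow> 'n \<Rightarrow> real" where
  "center v x i = x i - wavg v x"

definition excess :: "('n::finite \<Rightarrow> real) \<Rightarrow> ('n \<Rightarrow> real) \<Rightarrow> 'n \<Rightarrow> real" where
  "excess w s i = s i - sum s UNIV * w i"

definition mass_gap :: "('n::finite \<Rightarrow> real) \<Rightarrow> ('n \<Rightarrow> real) \<Rightarrow> ('n \<Rightarrow> real) \<Rightarrow> real" where
  "mass_gap v x s = sum x UNIV + sum s UNIV - real CARD('n) * wavg v x"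

lemma wavg_add: "wavg v (\<lambda>i. x i + y i) = wavg v x + wavg v y"
  by (simp add: wavg_def distrib_left sum.distrib)

lemma wavg_scale: "wavg v (\<lambda>i. c * x i) = c * wavg v x"
  by (simp add: wavg_def sum_distrib_left mult.left_commute)

lemma wavg_le_one: "prob_vector v \<Longrightarrow> prob_vector w \<Longrightarrow> wavg v w \<le> 1"
  using abs_wavg_le_l1_norm[of v w] l1_norm_prob_vector[of w] by simp

lemma osc_center: "osc (center v x) = osc x"
  using osc_add_const[of x "- wavg v x"] by (simp add: center_def[abs_def])

lemma wavg_center: "prob_vector v \<Longrightarrow> wavg v (center v x) = 0"
  by (simp add: wavg_def center_def right_diff_distrib sum_subtractf prob_vector_def
      flip: sum_distrib_right)

lemma abs_center_le_osc: "prob_vector v \<Longrightarrow> \<bar>center v x i\<bar> \<le> osc x"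
  using abs_le_osc_if_wavg_zero[OF _ wavg_center] by (metis osc_center)

lemma l1_norm_center_le: "prob_vector v \<Longrightarrow> l1_norm (center v x) \<le> real CARD('n) * osc (x :: 'n::finite \<Rightarrow> real)"
proof -
  assume "prob_vector v"
  then have "l1_norm (center v x) \<le> (\<Sum>i::'n\<in>UNIV. osc x)"
    unfolding l1_norm_def by (intro sum_mono abs_center_le_osc)
  then show ?thesis by simp
qed

lemma sum_excess: "prob_vector w \<Longrightarrow> sum (excess w s) UNIV = 0"
  by (simp add: excess_def sum_subtractf prob_vector_def flip: sum_distrib_left)

lemma excess_decomposition: "s i = excess w s i + sum s UNIV * w i"
  by (simp add: excess_def)

lemma l1_norm_excess_le: "prob_vector w \<Longrightarrow> l1_norm (excess w s) \<le> 2 * l1_norm s"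
proof -
  assume w: "prob_vector w"
  have "l1_norm (excess w s) \<le> l1_norm s + l1_norm (\<lambda>i. sum s UNIV * w i)"
    unfolding excess_def[abs_def] by (rule l1_norm_diff)
  also have "l1_norm (\<lambda>i. sum s UNIV * w i) = \<bar>sum s UNIV\<bar>"
    by (simp add: l1_norm_scale l1_norm_prob_vector[OF w])
  finally show ?thesis
    using abs_sum_le_l1_norm[of s] by linarith
qed

lemma wavg_excess: "wavg v (excess w s) = wavg v s - sum s UNIV * wavg v w"
  by (simp add: wavg_def excess_def right_diff_distrib sum_subtractf sum_distrib_left mult_ac)

lemma mass_gap_center: "mass_gap v x s = sum (center v x) UNIV + sum s UNIV"
  by (simp add: mass_gap_def center_def sum_subtractf)

text \<open>The Lyapunov function
  \<open>lyap\<close> weighs the oscillation of the states, summed over \<open>K1\<close> steps of \<open>P\<close>; the l1 norm of the part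
  of the surplus off the direction \<open>w\<close>, summed over \<open>K2\<close> steps of \<open>S\<close>; and the mass gap, which
  measures how far the \<open>\<pi>\<close>-average of the states is from the conserved average.\<close>

locale surplus_consensus =
  fixes P S :: "'n::finite \<Rightarrow> 'n \<Rightarrow> real" and \<pi> w :: "'n \<Rightarrow> real"
    and K1 K2 :: nat and \<eta>1 \<eta>2 :: real
  assumes P: "row_stochastic P" and S: "col_stochastic S"
    and K1: "0 < K1" "0 < \<eta>1" "\<And>i j. \<eta>1 \<le> mat_power P K1 i j"
    and K2: "0 < K2" "0 < \<eta>2" "\<And>i j. \<eta>2 \<le> mat_power S K2 i j"
    and \<pi>: "prob_vector \<pi>" "matvec (\<lambda>i j. P j i) \<pi> = \<pi>"
    and w: "prob_vector w" "matvec S w = w"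
    and wavg_pos: "0 < wavg \<pi> w"
begin

definition x_step :: "real \<Rightarrow> ('n \<Rightarrow> real) \<Rightarrow> ('n \<Rightarrow> real) \<Rightarrow> 'n \<Rightarrow> real" where
  "x_step \<epsilon> x s i = matvec P x i + \<epsilon> * s i"

definition s_step :: "real \<Rightarrow> ('n \<Rightarrow> real) \<Rightarrow> ('n \<Rightarrow> real) \<Rightarrow> 'n \<Rightarrow> real" where
  "s_step \<epsilon> x s i = x i - matvec P x i + matvec S s i - \<epsilon> * s i"

definition lyap_x :: "('n \<Rightarrow> real) \<Rightarrow> real" where
  "lyap_x x = orbit_sum osc (matvec P) K1 (center \<pi> x)"

definition lyap_s :: "('n \<Rightarrow> real) \<Rightarrow> real" where
  "lyap_s s = orbit_sum l1_norm (matvec S) K2 (excess w s)"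

definition q1 :: real where "q1 = 1 - real CARD('n) * \<eta>1 / K1"
definition q2 :: real where "q2 = 1 - real CARD('n) * \<eta>2 / K2"
definition \<kappa> :: real where "\<kappa> = real CARD('n) * wavg \<pi> w"
definition c1 :: real where "c1 = 2 * real K1"
definition c2 :: real where "c2 = 2 * real K2 * real CARD('n)"
definition \<gamma> :: real where "\<gamma> = 2 * c1 / \<kappa>"
definition \<delta> :: real where "\<delta> = (1 - q1) / (2 * (c2 + 1))"

definition lyap :: "('n \<Rightarrow> real) \<Rightarrow> ('n \<Rightarrow> real) \<Rightarrow> real" where
  "lyap x s = lyap_x x + \<delta> * lyap_s s + \<gamma> * \<bar>mass_gap \<pi> x s\<bar>"

text \<open>Each term of the minimum is one of the smallness conditions used in \<open>lyap_coefficients\<close>.\<close>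

definition eps_bar :: real where
  "eps_bar = Min {1 / \<kappa>, (1 - q1) / (4 * (c1 * real CARD('n) + \<gamma> * real CARD('n) ^ 2)),
                  (1 - q2) / 4, \<delta> * (1 - q2) / (4 * (c1 + \<gamma> * real CARD('n)))}"

definition rate :: "real \<Rightarrow> real" where
  "rate \<epsilon> = Max {1 - (1 - q1) / 4, 1 - (1 - q2) / 2, 1 - \<epsilon> * \<kappa> / 2}"

lemma q1_bounds: "0 \<le> q1" "q1 < 1"
  unfolding q1_def
  by (rule contraction_rate_bounds[OF disjI1[OF row_stochastic_mat_power[OF P]] K1(3) K1(2) K1(1)])+

lemma q2_bounds: "0 \<le> q2" "q2 < 1"
  unfolding q2_def
  by (rule contraction_rate_bounds[OF disjI2[OF col_stochastic_mat_power[OF S]] K2(3) K2(2) K2(1)])+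

lemma \<kappa>_bounds: "0 < \<kappa>" "\<kappa> \<le> real CARD('n)"
  using wavg_pos wavg_le_one[OF \<pi>(1) w(1)] by (simp_all add: \<kappa>_def)

lemma constants_pos: "0 < c1" "0 \<le> c2" "0 < \<gamma>" "0 < \<delta>"
proof -
  show c1: "0 < c1"
    using K1(1) by (simp add: c1_def)
  show c2: "0 \<le> c2"
    by (simp add: c2_def)
  show "0 < \<gamma>"
    using c1 \<kappa>_bounds by (simp add: \<gamma>_def)
  show "0 < \<delta>"
    using c2 q1_bounds by (simp add: \<delta>_def)
qed

lemma eps_bar_pos: "0 < eps_bar"
  unfolding eps_bar_def using \<kappa>_bounds q1_bounds q2_bounds constants_pos
  by (simp add: add_pos_pos)

lemma eps_bar_bounds:
  assumes "0 < \<epsilon>" "\<epsilon> < eps_bar"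
  shows "\<epsilon> * \<kappa> \<le> 1" "\<epsilon> * (c1 * real CARD('n) + \<gamma> * real CARD('n) ^ 2) \<le> (1 - q1) / 4"
    "\<epsilon> \<le> (1 - q2) / 4" "\<epsilon> * (c1 + \<gamma> * real CARD('n)) \<le> \<delta> * (1 - q2) / 4"
proof -
  have pos: "0 < c1 * real CARD('n) + \<gamma> * real CARD('n) ^ 2" "0 < c1 + \<gamma> * real CARD('n)"
    using constants_pos by (simp_all add: add_pos_pos)
  have "\<epsilon> \<le> 1 / \<kappa>" "\<epsilon> \<le> (1 - q1) / (4 * (c1 * real CARD('n) + \<gamma> * real CARD('n) ^ 2))"
    "\<epsilon> \<le> (1 - q2) / 4" "\<epsilon> \<le> \<delta> * (1 - q2) / (4 * (c1 + \<gamma> * real CARD('n)))"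
    using assms(2) by (simp_all add: eps_bar_def)
  then show "\<epsilon> * \<kappa> \<le> 1" "\<epsilon> * (c1 * real CARD('n) + \<gamma> * real CARD('n) ^ 2) \<le> (1 - q1) / 4"
    "\<epsilon> \<le> (1 - q2) / 4" "\<epsilon> * (c1 + \<gamma> * real CARD('n)) \<le> \<delta> * (1 - q2) / 4"
    using \<kappa>_bounds pos by (simp_all add: field_simps)
qed

lemma rate_bounds: "0 \<le> rate \<epsilon>" "0 < \<epsilon> \<Longrightarrow> rate \<epsilon> < 1"
  using q1_bounds q2_bounds \<kappa>_bounds by (simp_all add: rate_def le_max_iff_disj)

lemma P_contraction: "orbit_sum osc (matvec P) K1 (matvec P x) \<le> q1 * orbit_sum osc (matvec P) K1 x"
  unfolding q1_def by (rule osc_orbit_sum_contraction[OF P K1])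

lemma S_contraction:
  "sum y UNIV = 0 \<Longrightarrow> orbit_sum l1_norm (matvec S) K2 (matvec S y) \<le> q2 * orbit_sum l1_norm (matvec S) K2 y"
  unfolding q2_def by (rule l1_orbit_sum_contraction[OF S K2])

lemma wavg_matvec_P: "wavg \<pi> (matvec P x) = wavg \<pi> x"
proof -
  have "wavg \<pi> (matvec P x) = (\<Sum>j\<in>UNIV. matvec (\<lambda>i j. P j i) \<pi> j * x j)"
    unfolding wavg_def matvec_def sum_distrib_left sum_distrib_right
    by (subst sum.swap) (simp add: mult_ac)
  then show ?thesis
    using \<pi>(2) by (simp add: wavg_def)
qed

lemma matvec_P_center: "matvec P (center \<pi> x) i = matvec P x i - wavg \<pi> x"
  by (simp add: center_def[abs_def] matvec_diff matvec_const[OF P])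

lemma matvec_S_excess: "matvec S (excess w s) i = matvec S s i - sum s UNIV * w i"
  using fun_cong[OF w(2), of i] by (simp add: excess_def[abs_def] matvec_diff matvec_scale)

lemma mass_conservation: "sum (x_step \<epsilon> x s) UNIV + sum (s_step \<epsilon> x s) UNIV = sum x UNIV + sum s UNIV"
  by (simp add: x_step_def[abs_def] s_step_def[abs_def] sum.distrib sum_subtractf sum_matvec[OF S]
      flip: sum_distrib_left)

lemma wavg_x_step: "wavg \<pi> (x_step \<epsilon> x s) = wavg \<pi> x + \<epsilon> * wavg \<pi> s"
  by (simp add: x_step_def[abs_def] wavg_add wavg_scale wavg_matvec_P)

lemma center_x_step:
  "center \<pi> (x_step \<epsilon> x s) = (\<lambda>i. matvec P (center \<pi> x) i + \<epsilon> * center \<pi> s i)"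
  by (simp add: fun_eq_iff center_def wavg_x_step matvec_P_center x_step_def algebra_simps)

lemma excess_s_step:
  "excess w (s_step \<epsilon> x s)
     = (\<lambda>i. matvec S (excess w s) i + (- \<epsilon> * excess w s i + excess w (\<lambda>j. x j - matvec P x j) i))"
proof -
  let ?v = "\<lambda>j. x j - matvec P x j"
  have sum_s: "sum (s_step \<epsilon> x s) UNIV = sum ?v UNIV + sum s UNIV - \<epsilon> * sum s UNIV"
    by (simp add: s_step_def[abs_def] sum.distrib sum_subtractf sum_matvec[OF S] flip: sum_distrib_left)
  show ?thesis
    unfolding fun_eq_iff matvec_S_excess excess_def[of w "s_step \<epsilon> x s"] sum_s
      excess_def[of w s] excess_def[of w ?v]
    by (simp add: s_step_def algebra_simps)
qed

lemma mass_gap_step: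
  "mass_gap \<pi> (x_step \<epsilon> x s) (s_step \<epsilon> x s) = mass_gap \<pi> x s - real CARD('n) * \<epsilon> * wavg \<pi> s"
  unfolding mass_gap_def mass_conservation wavg_x_step by (simp add: algebra_simps)

lemma osc_le_lyap_x: "osc x \<le> lyap_x x"
  using le_orbit_sum[where f = osc and T = "matvec P", OF osc_nonneg K1(1), of "center \<pi> x"]
  by (simp add: lyap_x_def osc_center)

lemma l1_norm_excess_le_lyap_s: "l1_norm (excess w s) \<le> lyap_s s"
  using le_orbit_sum[where f = l1_norm and T = "matvec S", OF l1_norm_nonneg K2(1)]
  by (simp add: lyap_s_def)

lemma lyap_parts_nonneg: "0 \<le> lyap_x x" "0 \<le> lyap_s s"
  by (simp_all add: lyap_x_def lyap_s_def orbit_sum_nonneg osc_nonneg l1_norm_nonneg)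

lemma abs_sum_center_le: "\<bar>sum (center \<pi> x) UNIV\<bar> \<le> real CARD('n) * lyap_x x"
proof -
  have "\<bar>sum (center \<pi> x) UNIV\<bar> \<le> real CARD('n) * osc x"
    using abs_sum_le_l1_norm l1_norm_center_le[OF \<pi>(1)] by (rule order_trans)
  also have "\<dots> \<le> real CARD('n) * lyap_x x"
    by (intro mult_left_mono osc_le_lyap_x) simp
  finally show ?thesis .
qed

lemma l1_norm_s_le: "l1_norm s \<le> lyap_s s + \<bar>mass_gap \<pi> x s\<bar> + real CARD('n) * lyap_x x"
proof -
  have "l1_norm s \<le> l1_norm (excess w s) + l1_norm (\<lambda>i. sum s UNIV * w i)"
    using l1_norm_add[of "excess w s" "\<lambda>i. sum s UNIV * w i"] by (simp flip: excess_decomposition)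
  also have "l1_norm (\<lambda>i. sum s UNIV * w i) = \<bar>sum s UNIV\<bar>"
    by (simp add: l1_norm_scale l1_norm_prob_vector[OF w(1)])
  also have "sum s UNIV = mass_gap \<pi> x s - sum (center \<pi> x) UNIV"
    by (simp add: mass_gap_center)
  finally show ?thesis
    using l1_norm_excess_le_lyap_s[of s] abs_sum_center_le[of x] by linarith
qed

lemma lyap_x_step:
  assumes "0 \<le> \<epsilon>"
  shows "lyap_x (x_step \<epsilon> x s) \<le> q1 * lyap_x x + \<epsilon> * c1 * l1_norm s"
proof -
  let ?L = "orbit_sum osc (matvec P) K1"
  have split: "lyap_x (x_step \<epsilon> x s) \<le> ?L (matvec P (center \<pi> x)) + ?L (\<lambda>i. \<epsilon> * center \<pi> s i)"
    unfolding lyap_x_def center_x_step by (rule orbit_sum_matvec_add[OF osc_add])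
  have "?L (\<lambda>i. \<epsilon> * center \<pi> s i) \<le> \<epsilon> * ?L (center \<pi> s)"
    using orbit_sum_matvec_scale[where f = osc and c = \<epsilon> and Q = P and K = K1 and x = "center \<pi> s",
        OF osc_scale_le] assms by simp
  also have "\<dots> \<le> \<epsilon> * (K1 * osc (center \<pi> s))"
    by (intro mult_left_mono orbit_sum_le osc_matvec_power_le[OF P] assms)
  also have "\<dots> \<le> \<epsilon> * (K1 * (2 * l1_norm s))"
    using osc_le_l1_norm[of s] assms by (intro mult_left_mono) (simp_all add: osc_center)
  finally show ?thesis
    using split P_contraction[of "center \<pi> x"] by (simp add: lyap_x_def c1_def mult_ac)
qed

lemma lyap_injection_le:
  "orbit_sum l1_norm (matvec S) K2 (excess w (\<lambda>j. x j - matvec P x j)) \<le> c2 * lyap_x x"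
proof -
  let ?v = "\<lambda>j. x j - matvec P x j"
  let ?r = "excess w ?v"
  have "l1_norm ?v \<le> (\<Sum>j::'n\<in>UNIV. osc x)"
    unfolding l1_norm_def by (intro sum_mono abs_diff_matvec_le_osc[OF P])
  then have "l1_norm ?r \<le> 2 * (real CARD('n) * osc x)"
    using l1_norm_excess_le[OF w(1), of ?v] by simp
  also have "\<dots> \<le> 2 * (real CARD('n) * lyap_x x)"
    using osc_le_lyap_x[of x] by simp
  finally have "K2 * l1_norm ?r \<le> K2 * (2 * (real CARD('n) * lyap_x x))"
    by (rule mult_left_mono) simp
  then have "K2 * l1_norm ?r \<le> c2 * lyap_x x"
    by (simp add: c2_def mult_ac)
  moreover have "orbit_sum l1_norm (matvec S) K2 ?r \<le> K2 * l1_norm ?r"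
    by (intro orbit_sum_le l1_norm_matvec_power_le[OF S])
  ultimately show ?thesis
    by linarith
qed

lemma lyap_s_step:
  assumes "0 \<le> \<epsilon>"
  shows "lyap_s (s_step \<epsilon> x s) \<le> (q2 + \<epsilon>) * lyap_s s + c2 * lyap_x x"
proof -
  let ?L = "orbit_sum l1_norm (matvec S) K2" and ?v = "\<lambda>j. x j - matvec P x j"
  let ?r = "excess w ?v"
  have "?L (\<lambda>i. matvec S (excess w s) i + (- \<epsilon> * excess w s i + ?r i))
      \<le> ?L (matvec S (excess w s)) + ?L (\<lambda>i. - \<epsilon> * excess w s i + ?r i)"
    by (rule orbit_sum_matvec_add[OF l1_norm_add])
  moreover have "?L (\<lambda>i. - \<epsilon> * excess w s i + ?r i) \<le> ?L (\<lambda>i. - \<epsilon> * excess w s i) + ?L ?r"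
    by (rule orbit_sum_matvec_add[OF l1_norm_add])
  ultimately have split: "lyap_s (s_step \<epsilon> x s)
      \<le> ?L (matvec S (excess w s)) + (?L (\<lambda>i. - \<epsilon> * excess w s i) + ?L ?r)"
    unfolding lyap_s_def excess_s_step by linarith
  have "?L (\<lambda>i. - \<epsilon> * excess w s i) \<le> \<epsilon> * lyap_s s"
    using orbit_sum_matvec_scale[where f = l1_norm and c = "- \<epsilon>" and Q = S and K = K2 and x = "excess w s",
        OF eq_refl[OF l1_norm_scale]] assms
    by (simp add: lyap_s_def)
  moreover have "?L (matvec S (excess w s)) \<le> q2 * lyap_s s"
    unfolding lyap_s_def by (rule S_contraction[OF sum_excess[OF w(1)]])
  moreover have "?L ?r \<le> c2 * lyap_x x"
    by (rule lyap_injection_le)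
  ultimately show ?thesis
    using split by (simp add: algebra_simps)
qed

text \<open>The surplus is \<open>excess w s\<close> plus \<open>(sum s) w\<close>, and \<open>sum s\<close> equals the mass gap up to the small
  term \<open>sum (center \<pi> x)\<close>; this component of the surplus pulls the gap towards zero at rate \<open>\<epsilon>\<kappa>\<close>.\<close>

lemma mass_gap_step_bound:
  assumes "0 \<le> \<epsilon>" "\<epsilon> * \<kappa> \<le> 1"
  shows "\<bar>mass_gap \<pi> (x_step \<epsilon> x s) (s_step \<epsilon> x s)\<bar>
           \<le> (1 - \<epsilon> * \<kappa>) * \<bar>mass_gap \<pi> x s\<bar>
              + real CARD('n) * \<epsilon> * (lyap_s s + real CARD('n) * lyap_x x)"
proof -
  let ?g = "mass_gap \<pi> x s" and ?t = "sum (center \<pi> x) UNIV" and ?n = "real CARD('n)"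
  have ws: "wavg \<pi> s = wavg \<pi> (excess w s) + (?g - ?t) * wavg \<pi> w"
    by (simp add: wavg_excess mass_gap_center)
  have gap: "mass_gap \<pi> (x_step \<epsilon> x s) (s_step \<epsilon> x s)
               = (1 - \<epsilon> * \<kappa>) * ?g - ?n * \<epsilon> * wavg \<pi> (excess w s) + \<epsilon> * \<kappa> * ?t"
    unfolding mass_gap_step ws by (simp add: \<kappa>_def algebra_simps)
  have e: "\<bar>wavg \<pi> (excess w s)\<bar> \<le> lyap_s s"
    using abs_wavg_le_l1_norm[OF \<pi>(1)] l1_norm_excess_le_lyap_s order_trans by blast
  have "\<bar>\<kappa> * ?t\<bar> = \<kappa> * \<bar>?t\<bar>"
    using \<kappa>_bounds by (simp add: abs_mult)
  also have "\<dots> \<le> ?n * (?n * lyap_x x)"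
    using \<kappa>_bounds abs_sum_center_le[of x] by (intro mult_mono) simp_all
  finally have t: "\<bar>\<kappa> * ?t\<bar> \<le> ?n * (?n * lyap_x x)" .
  have tri: "\<bar>a - b + c\<bar> \<le> \<bar>a\<bar> + \<bar>b\<bar> + \<bar>c\<bar>" for a b c :: real
    by linarith
  have "\<bar>mass_gap \<pi> (x_step \<epsilon> x s) (s_step \<epsilon> x s)\<bar>
          \<le> (1 - \<epsilon> * \<kappa>) * \<bar>?g\<bar> + ?n * \<epsilon> * \<bar>wavg \<pi> (excess w s)\<bar> + \<epsilon> * \<bar>\<kappa> * ?t\<bar>"
    unfolding gap using tri[of "(1 - \<epsilon> * \<kappa>) * ?g" "?n * \<epsilon> * wavg \<pi> (excess w s)" "\<epsilon> * (\<kappa> * ?t)"] assms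
    by (simp add: abs_mult mult.assoc)
  also have "\<dots> \<le> (1 - \<epsilon> * \<kappa>) * \<bar>?g\<bar> + ?n * \<epsilon> * lyap_s s + \<epsilon> * (?n * (?n * lyap_x x))"
    using e t assms by (intro add_mono mult_left_mono order_refl) simp_all
  finally show ?thesis
    by (simp add: algebra_simps)
qed

lemma lyap_parts_le_lyap:
  "lyap_x x \<le> lyap x s" "\<delta> * lyap_s s \<le> lyap x s" "\<gamma> * \<bar>mass_gap \<pi> x s\<bar> \<le> lyap x s"
  using lyap_parts_nonneg constants_pos by (simp_all add: lyap_def)

lemma abs_excess_le_lyap: "\<delta> * \<bar>excess w s i\<bar> \<le> lyap x s"
proof -
  have "\<bar>excess w s i\<bar> \<le> lyap_s s"
    using abs_le_l1_norm[of "excess w s" i] l1_norm_excess_le_lyap_s[of s] by linarith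
  then show ?thesis
    using lyap_parts_le_lyap(2)[where x = x and s = s] constants_pos
    by (meson less_imp_le mult_left_mono order_trans)
qed

lemma lyap_nonneg: "0 \<le> lyap x s"
  using lyap_parts_le_lyap(1)[of x s] lyap_parts_nonneg(1)[of x] by linarith

lemma rate_ge: "1 - (1 - q1) / 4 \<le> rate \<epsilon>" "1 - (1 - q2) / 2 \<le> rate \<epsilon>" "1 - \<epsilon> * \<kappa> / 2 \<le> rate \<epsilon>"
  by (simp_all add: rate_def)

text \<open>The weights of the Lyapunov function: \<open>\<delta>\<close> is small enough that the \<open>O(1)\<close> coupling \<open>c2\<close> from the
  states into the surplus is absorbed by the contraction of the states, and \<open>\<gamma>\<close> is large enough that
  the \<open>O(\<epsilon>)\<close> coupling \<open>c1\<close> from the mass gap into the states is absorbed by the slow decay \<open>1 - \<epsilon>\<kappa>\<close> of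
  the mass gap.\<close>

lemma lyap_weights: "\<delta> * c2 \<le> (1 - q1) / 2" "\<gamma> * \<kappa> = 2 * c1"
proof -
  have "\<delta> * c2 = (1 - q1) / 2 * (c2 / (c2 + 1))"
    using constants_pos by (simp add: \<delta>_def field_simps)
  also have "\<dots> \<le> (1 - q1) / 2"
    using q1_bounds constants_pos by (intro mult_left_le) simp_all
  finally show "\<delta> * c2 \<le> (1 - q1) / 2" .
  show "\<gamma> * \<kappa> = 2 * c1"
    using \<kappa>_bounds by (simp add: \<gamma>_def)
qed

lemma lyap_coefficients:
  assumes "0 < \<epsilon>" "\<epsilon> < eps_bar"
  shows "q1 + \<epsilon> * (c1 * real CARD('n) + \<gamma> * real CARD('n) ^ 2) + \<delta> * c2 \<le> rate \<epsilon>"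
    and "\<delta> * q2 + \<delta> * \<epsilon> + \<epsilon> * (c1 + \<gamma> * real CARD('n)) \<le> rate \<epsilon> * \<delta>"
    and "\<gamma> - \<epsilon> * (\<gamma> * \<kappa> - c1) \<le> rate \<epsilon> * \<gamma>"
proof -
  note small = eps_bar_bounds[OF assms]
  show "q1 + \<epsilon> * (c1 * real CARD('n) + \<gamma> * real CARD('n) ^ 2) + \<delta> * c2 \<le> rate \<epsilon>"
    using small(2) lyap_weights(1) rate_ge(1)[of \<epsilon>] by argo
  have "\<delta> * \<epsilon> \<le> \<delta> * ((1 - q2) / 4)"
    using small(3) constants_pos by (intro mult_left_mono) simp_all
  then have "\<delta> * \<epsilon> \<le> (\<delta> - \<delta> * q2) / 4"
    by (simp add: right_diff_distrib)
  moreover have "\<epsilon> * c1 + \<epsilon> * (\<gamma> * real CARD('n)) \<le> (\<delta> - \<delta> * q2) / 4"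
    using small(4) by (simp only: distrib_left right_diff_distrib mult_1_right)
  moreover have "(1 - (1 - q2) / 2) * \<delta> = \<delta> * q2 + (\<delta> - \<delta> * q2) / 2"
    by (simp add: field_simps)
  ultimately have "\<delta> * q2 + \<delta> * \<epsilon> + \<epsilon> * (c1 + \<gamma> * real CARD('n)) \<le> (1 - (1 - q2) / 2) * \<delta>"
    unfolding distrib_left by linarith
  also have "\<dots> \<le> rate \<epsilon> * \<delta>"
    using rate_ge(2)[of \<epsilon>] constants_pos by (intro mult_right_mono) simp_all
  finally show "\<delta> * q2 + \<delta> * \<epsilon> + \<epsilon> * (c1 + \<gamma> * real CARD('n)) \<le> rate \<epsilon> * \<delta>" .
  have "\<gamma> - \<epsilon> * (\<gamma> * \<kappa> - c1) = (1 - \<epsilon> * \<kappa> / 2) * \<gamma>"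
    using lyap_weights(2) by (simp add: algebra_simps)
  also have "\<dots> \<le> rate \<epsilon> * \<gamma>"
    using rate_ge(3)[of \<epsilon>] constants_pos by (intro mult_right_mono) simp_all
  finally show "\<gamma> - \<epsilon> * (\<gamma> * \<kappa> - c1) \<le> rate \<epsilon> * \<gamma>" .
qed

lemma lyap_step:
  assumes "0 < \<epsilon>" "\<epsilon> < eps_bar"
  shows "lyap (x_step \<epsilon> x s) (s_step \<epsilon> x s) \<le> rate \<epsilon> * lyap x s"
proof -
  let ?n = "real CARD('n)" and ?A = "lyap_x x" and ?B = "lyap_s s" and ?C = "\<bar>mass_gap \<pi> x s\<bar>"
  note small = eps_bar_bounds[OF assms]
  have "\<epsilon> * c1 * l1_norm s \<le> \<epsilon> * c1 * (?B + ?C + ?n * ?A)"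
    using l1_norm_s_le[of s x] assms constants_pos by (intro mult_left_mono) simp_all
  then have A: "lyap_x (x_step \<epsilon> x s) \<le> q1 * ?A + \<epsilon> * c1 * (?B + ?C + ?n * ?A)"
    using lyap_x_step[of \<epsilon> x s] assms by linarith
  have B: "lyap_s (s_step \<epsilon> x s) \<le> (q2 + \<epsilon>) * ?B + c2 * ?A"
    using lyap_s_step[of \<epsilon> x s] assms by simp
  have C: "\<bar>mass_gap \<pi> (x_step \<epsilon> x s) (s_step \<epsilon> x s)\<bar> \<le> (1 - \<epsilon> * \<kappa>) * ?C + ?n * \<epsilon> * (?B + ?n * ?A)"
    using mass_gap_step_bound[of \<epsilon> x s] assms small(1) by simp
  have "lyap (x_step \<epsilon> x s) (s_step \<epsilon> x s)
      \<le> (q1 * ?A + \<epsilon> * c1 * (?B + ?C + ?n * ?A)) + \<delta> * ((q2 + \<epsilon>) * ?B + c2 * ?A)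
         + \<gamma> * ((1 - \<epsilon> * \<kappa>) * ?C + ?n * \<epsilon> * (?B + ?n * ?A))"
    using A mult_left_mono[OF B less_imp_le[OF constants_pos(4)]]
      mult_left_mono[OF C less_imp_le[OF constants_pos(3)]]
    unfolding lyap_def by linarith
  also have "\<dots> = (q1 + \<epsilon> * (c1 * ?n + \<gamma> * ?n ^ 2) + \<delta> * c2) * ?A
      + (\<delta> * q2 + \<delta> * \<epsilon> + \<epsilon> * (c1 + \<gamma> * ?n)) * ?B + (\<gamma> - \<epsilon> * (\<gamma> * \<kappa> - c1)) * ?C"
    by (simp add: algebra_simps power2_eq_square)
  also have "\<dots> \<le> rate \<epsilon> * ?A + rate \<epsilon> * \<delta> * ?B + rate \<epsilon> * \<gamma> * ?C"
    using lyap_coefficients[OF assms] lyap_parts_nonneg by (intro add_mono mult_right_mono) simp_all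
  also have "\<dots> = rate \<epsilon> * lyap x s"
    by (simp add: lyap_def algebra_simps)
  finally show ?thesis .
qed

lemma lyap_tendsto_zero:
  assumes "0 < \<epsilon>" "\<epsilon> < eps_bar"
    and x_Suc: "\<And>k. x (Suc k) = x_step \<epsilon> (x k) (s k)" and s_Suc: "\<And>k. s (Suc k) = s_step \<epsilon> (x k) (s k)"
  shows "(\<lambda>k. lyap (x k) (s k)) \<longlonglongrightarrow> 0"
proof (rule Lim_null_comparison)
  show "\<forall>\<^sub>F k in sequentially. norm (lyap (x k) (s k)) \<le> rate \<epsilon> ^ k * lyap (x 0) (s 0)"
  proof (intro always_eventually allI)
    fix k
    show "norm (lyap (x k) (s k)) \<le> rate \<epsilon> ^ k * lyap (x 0) (s 0)"
    proof (induction k)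
      case (Suc k)
      have "lyap (x (Suc k)) (s (Suc k)) \<le> rate \<epsilon> * lyap (x k) (s k)"
        unfolding x_Suc s_Suc by (rule lyap_step[OF assms(1,2)])
      also have "\<dots> \<le> rate \<epsilon> * (rate \<epsilon> ^ k * lyap (x 0) (s 0))"
        using Suc.IH rate_bounds(1) lyap_nonneg by (intro mult_left_mono) simp_all
      finally show ?case
        using lyap_nonneg by simp
    qed (simp add: lyap_nonneg)
  qed
  show "(\<lambda>k. rate \<epsilon> ^ k * lyap (x 0) (s 0)) \<longlonglongrightarrow> 0"
    using rate_bounds(1) rate_bounds(2)[OF assms(1)]
    by (intro tendsto_mult_left_zero LIMSEQ_power_zero) simp
qed

lemma tendsto_consensus:
  assumes "0 < \<epsilon>" "\<epsilon> < eps_bar" and s0: "s 0 = (\<lambda>_. 0)"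
    and x_Suc: "\<And>k. x (Suc k) = x_step \<epsilon> (x k) (s k)" and s_Suc: "\<And>k. s (Suc k) = s_step \<epsilon> (x k) (s k)"
  shows "(\<lambda>k. x k i) \<longlonglongrightarrow> sum (x 0) UNIV / real CARD('n)" and "(\<lambda>k. s k i) \<longlonglongrightarrow> 0"
proof -
  let ?V = "\<lambda>k. lyap (x k) (s k)" and ?g = "\<lambda>k. mass_gap \<pi> (x k) (s k)"
  have V: "?V \<longlonglongrightarrow> 0"
    by (rule lyap_tendsto_zero[where x = x and s = s]) (use assms in auto)
  have null: "f \<longlonglongrightarrow> 0" if "\<And>k. \<bar>f k\<bar> \<le> c * ?V k" for f :: "nat \<Rightarrow> real" and c
  proof (rule Lim_null_comparison)
    show "\<forall>\<^sub>F k in sequentially. norm (f k) \<le> c * ?V k"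
      using that by (simp add: always_eventually)
    show "(\<lambda>k. c * ?V k) \<longlonglongrightarrow> 0"
      by (rule tendsto_mult_right_zero[OF V])
  qed
  have center: "(\<lambda>k. center \<pi> (x k) j) \<longlonglongrightarrow> 0" for j
  proof (rule null[of _ 1])
    show "\<bar>center \<pi> (x k) j\<bar> \<le> 1 * ?V k" for k
      using abs_center_le_osc[OF \<pi>(1), of "x k" j] osc_le_lyap_x[of "x k"] lyap_parts_le_lyap(1)[of "x k" "s k"]
      by linarith
  qed
  have gap: "?g \<longlonglongrightarrow> 0"
  proof (rule null[of _ "1 / \<gamma>"])
    show "\<bar>?g k\<bar> \<le> 1 / \<gamma> * ?V k" for k
      using lyap_parts_le_lyap(3) constants_pos by (simp add: field_simps mult.commute)
  qed
  have mass: "sum (x k) UNIV + sum (s k) UNIV = sum (x 0) UNIV" for k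
    by (induction k) (simp_all add: s0 x_Suc s_Suc mass_conservation)
  have "(\<lambda>k. center \<pi> (x k) i + (sum (x 0) UNIV - ?g k) / real CARD('n))
          \<longlonglongrightarrow> 0 + (sum (x 0) UNIV - 0) / real CARD('n)"
    by (intro tendsto_intros center gap) simp
  moreover have "center \<pi> (x k) i + (sum (x 0) UNIV - ?g k) / real CARD('n) = x k i" for k
    using mass[of k] by (simp add: center_def mass_gap_def field_simps)
  ultimately show "(\<lambda>k. x k i) \<longlonglongrightarrow> sum (x 0) UNIV / real CARD('n)"
    by simp
  have excess: "(\<lambda>k. excess w (s k) i) \<longlonglongrightarrow> 0"
  proof (rule null[of _ "1 / \<delta>"])
    show "\<bar>excess w (s k) i\<bar> \<le> 1 / \<delta> * ?V k" for k
      using abs_excess_le_lyap[of "s k" i "x k"] constants_pos by (simp add: field_simps)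
  qed
  have "(\<lambda>k. excess w (s k) i + (?g k - sum (center \<pi> (x k)) UNIV) * w i) \<longlonglongrightarrow> 0 + (0 - 0) * w i"
    by (intro tendsto_intros excess gap tendsto_null_sum center)
  then show "(\<lambda>k. s k i) \<longlonglongrightarrow> 0"
    by (simp add: mass_gap_center flip: excess_decomposition)
qed

end

subsection \<open>The consensus algorithm\<close>

definition update_matrix :: "('n::finite \<Rightarrow> 'n \<Rightarrow> real) \<Rightarrow> 'n \<Rightarrow> 'n \<Rightarrow> real" where
  "update_matrix a i j = (mat 1 - lapl a) $ i $ j"

definition surplus_matrix :: "('n::finite \<Rightarrow> 'n \<Rightarrow> real) \<Rightarrow> 'n \<Rightarrow> 'n \<Rightarrow> real" where
  "surplus_matrix b i j = Smat b $ i $ j"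

lemma update_matrix_eq: "update_matrix a i j = (if i = j then 1 - (\<Sum>k\<in>UNIV. a i k) else 0) + a i j"
  by (simp add: update_matrix_def lapl_def mat_def)

lemma surplus_matrix_eq: "surplus_matrix b i j = (if i = j then 1 - (\<Sum>k\<in>UNIV. b j k) else 0) + b j i"
  by (simp add: surplus_matrix_def Smat_def)

lemma sum_UNIV_Plus:
  "sum f (UNIV :: ('a::finite + 'b::finite) set) = (\<Sum>i\<in>UNIV. f (Inl i)) + (\<Sum>i\<in>UNIV. f (Inr i))"
  using sum.Plus[of "UNIV :: 'a set" "UNIV :: 'b set" f] by (simp add: comp_def)

lemma sum_diagonal: "(\<Sum>j\<in>UNIV. (if (i::'n::finite) = j then c else 0) * x j) = c * (x i :: real)"
  by (simp add: if_distrib[where f = "\<lambda>t. t * _"] cong: if_cong)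

lemma Mmat_entries:
  "Mmat a b \<epsilon> $ Inl i $ Inl j = update_matrix a i j"
  "Mmat a b \<epsilon> $ Inl i $ Inr j = (if i = j then \<epsilon> else 0)"
  "Mmat a b \<epsilon> $ Inr i $ Inl j = (if i = j then 1 else 0) - update_matrix a i j"
  "Mmat a b \<epsilon> $ Inr i $ Inr j = surplus_matrix b i j - (if i = j then \<epsilon> else 0)"
  by (simp_all add: Mmat_def update_matrix_def surplus_matrix_def mat_def)

lemma Mmat_mult_Inl:
  "(Mmat a b \<epsilon> *v z) $ Inl i = matvec (update_matrix a) (\<lambda>j. z $ Inl j) i + \<epsilon> * z $ Inr i"
  by (simp add: matrix_vector_mult_def sum_UNIV_Plus Mmat_entries matvec_def sum_diagonal)

lemma Mmat_mult_Inr: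
  "(Mmat a b \<epsilon> *v z) $ Inr i = z $ Inl i - matvec (update_matrix a) (\<lambda>j. z $ Inl j) i
     + matvec (surplus_matrix b) (\<lambda>j. z $ Inr j) i - \<epsilon> * z $ Inr i"
  by (simp add: matrix_vector_mult_def sum_UNIV_Plus Mmat_entries matvec_def left_diff_distrib
      sum_subtractf sum_diagonal)

lemma traj_Mmat:
  assumes x: "x = (\<lambda>k i. traj (Mmat a b \<epsilon>) (stack x0 0) k $ Inl i)"
    and s: "s = (\<lambda>k i. traj (Mmat a b \<epsilon>) (stack x0 0) k $ Inr i)"
  shows "x 0 = (\<lambda>i. x0 $ i)" "s 0 = (\<lambda>_. 0)"
    "x (Suc k) = (\<lambda>i. matvec (update_matrix a) (x k) i + \<epsilon> * s k i)"
    "s (Suc k) = (\<lambda>i. x k i - matvec (update_matrix a) (x k) i + matvec (surplus_matrix b) (s k) i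
                    - \<epsilon> * s k i)"
  by (simp_all add: x s stack_def Mmat_mult_Inl Mmat_mult_Inr)

lemma average_consensus_iff:
  fixes a b :: "'n::finite \<Rightarrow> 'n \<Rightarrow> real"
  shows "average_consensus a b \<epsilon> \<longleftrightarrow>
     (\<forall>x0 i. (\<lambda>k. traj (Mmat a b \<epsilon>) (stack x0 0) k $ Inl i) \<longlonglongrightarrow> (\<Sum>j\<in>UNIV. x0 $ j) / real CARD('n)
           \<and> (\<lambda>k. traj (Mmat a b \<epsilon>) (stack x0 0) k $ Inr i) \<longlonglongrightarrow> 0)"
    (is "_ \<longleftrightarrow> (\<forall>x0 i. ?x x0 i \<and> ?s x0 i)")
proof
  assume consensus: "average_consensus a b \<epsilon>"
  show "\<forall>x0 i. ?x x0 i \<and> ?s x0 i"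
  proof (intro allI conjI)
    fix x0 :: "real^'n" and i
    have lim: "traj (Mmat a b \<epsilon>) (stack x0 0)
        \<longlonglongrightarrow> stack (((\<Sum>j\<in>UNIV. x0 $ j) / real CARD('n)) *\<^sub>R 1) 0"
      using consensus unfolding average_consensus_def by blast
    show "?x x0 i"
      using tendsto_vec_nth[OF lim, of "Inl i"] by (simp add: stack_def)
    show "?s x0 i"
      using tendsto_vec_nth[OF lim, of "Inr i"] by (simp add: stack_def)
  qed
next
  assume "\<forall>x0 i. ?x x0 i \<and> ?s x0 i"
  then show "average_consensus a b \<epsilon>"
    unfolding average_consensus_def
    by (intro allI vec_tendstoI) (auto simp: stack_def split: sum.split)
qed

context
  fixes E :: "('n::finite \<times> 'n) set" and a b :: "'n \<Rightarrow> 'n \<Rightarrow> real"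
  assumes weights: "valid_weights E a b"
begin

lemma valid_weightsD:
  "(j, i) \<in> E \<Longrightarrow> 0 < a i j" "(j, i) \<notin> E \<Longrightarrow> a i j = 0" "0 \<le> a i j" "(\<Sum>k\<in>UNIV. a i k) < 1"
  "(i, j) \<in> E \<Longrightarrow> 0 < b i j" "(i, j) \<notin> E \<Longrightarrow> b i j = 0" "0 \<le> b i j" "(\<Sum>k\<in>UNIV. b i k) < 1"
proof -
  show a_pos: "(j, i) \<in> E \<Longrightarrow> 0 < a i j" and a_zero: "(j, i) \<notin> E \<Longrightarrow> a i j = 0" for i j
    using weights by (auto simp: valid_weights_def in_nbrs_def)
  show b_pos: "(i, j) \<in> E \<Longrightarrow> 0 < b i j" and b_zero: "(i, j) \<notin> E \<Longrightarrow> b i j = 0" for i j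
    using weights by (auto simp: valid_weights_def out_nbrs_def)
  show "0 \<le> a i j" "0 \<le> b i j"
    using a_pos[of j i] a_zero[of j i] b_pos[of i j] b_zero[of i j]
    by (cases "(j, i) \<in> E"; cases "(i, j) \<in> E"; simp)+
  have "(\<Sum>k\<in>UNIV. a i k) = (\<Sum>k\<in>in_nbrs E i. a i k)"
    by (rule sum.mono_neutral_right) (auto simp: in_nbrs_def a_zero)
  moreover have "(\<Sum>k\<in>UNIV. b i k) = (\<Sum>k\<in>out_nbrs E i. b i k)"
    by (rule sum.mono_neutral_right) (auto simp: out_nbrs_def b_zero)
  ultimately show "(\<Sum>k\<in>UNIV. a i k) < 1" "(\<Sum>k\<in>UNIV. b i k) < 1"
    using weights by (simp_all add: valid_weights_def)
qed

lemma valid_weights_stochastic: "row_stochastic (update_matrix a)" "col_stochastic (surplus_matrix b)"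
  using valid_weightsD(3,4,7,8)
  by (auto simp: row_stochastic_def col_stochastic_def update_matrix_eq surplus_matrix_eq sum.distrib
      less_imp_le add_nonneg_nonneg)

lemma valid_weights_off_graph:
  "i \<noteq> j \<Longrightarrow> (j, i) \<notin> E \<Longrightarrow> update_matrix a i j = 0"
  "i \<noteq> j \<Longrightarrow> (j, i) \<notin> E \<Longrightarrow> surplus_matrix b i j = 0"
  by (simp_all add: update_matrix_eq surplus_matrix_eq valid_weightsD(2,6))

lemma valid_weights_lower_bound:
  obtains \<delta> where "0 < \<delta>"
    "\<And>i. \<delta> \<le> update_matrix a i i" "\<And>i j. (j, i) \<in> E \<Longrightarrow> \<delta> \<le> update_matrix a i j"
    "\<And>i. \<delta> \<le> surplus_matrix b i i" "\<And>i j. (j, i) \<in> E \<Longrightarrow> \<delta> \<le> surplus_matrix b i j"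
proof -
  define F where "F = range (\<lambda>i. 1 - (\<Sum>k\<in>UNIV. a i k)) \<union> range (\<lambda>i. 1 - (\<Sum>k\<in>UNIV. b i k))
                      \<union> (\<lambda>(j, i). min (a i j) (b j i)) ` E"
  have F: "finite F" "F \<noteq> {}" "\<And>t. t \<in> F \<Longrightarrow> 0 < t"
    using valid_weightsD(1,4,5,8) by (auto simp: F_def)
  have pos: "0 < Min F" and le: "\<And>t. t \<in> F \<Longrightarrow> Min F \<le> t"
    using F Min_in by auto
  have diag: "Min F \<le> 1 - (\<Sum>k\<in>UNIV. a i k)" "Min F \<le> 1 - (\<Sum>k\<in>UNIV. b i k)" for i
    by (auto intro: le simp: F_def)
  have edge: "Min F \<le> a i j" "Min F \<le> b j i" if "(j, i) \<in> E" for i j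
    using le[of "min (a i j) (b j i)"] that by (force simp: F_def)+
  show ?thesis
  proof (rule that[OF pos])
    show "Min F \<le> update_matrix a i i" "Min F \<le> surplus_matrix b i i" for i
      using diag[of i] valid_weightsD(3)[of i i] valid_weightsD(7)[of i i]
      by (simp_all add: update_matrix_eq surplus_matrix_eq)
    show "Min F \<le> update_matrix a i j" "Min F \<le> surplus_matrix b i j" if "(j, i) \<in> E" for i j
      using edge[OF that] valid_weightsD(4)[of i] valid_weightsD(8)[of j]
      by (auto simp: update_matrix_eq surplus_matrix_eq)
  qed
qed

lemma primitive_if_strongly_connected:
  assumes "strongly_connected E"
  shows "\<exists>K \<eta>. 0 < K \<and> 0 < \<eta> \<and> (\<forall>i j. \<eta> \<le> mat_power (update_matrix a) K i j)"
    and "\<exists>K \<eta>. 0 < K \<and> 0 < \<eta> \<and> (\<forall>i j. \<eta> \<le> mat_power (surplus_matrix b) K i j)"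
    and "\<exists>K \<eta>. 0 < K \<and> 0 < \<eta> \<and> (\<forall>i j. \<eta> \<le> mat_power (\<lambda>i j. update_matrix a j i) K i j)"
proof -
  obtain \<delta> where "0 < \<delta>"
    and P: "\<And>i. \<delta> \<le> update_matrix a i i" "\<And>i j. (j, i) \<in> E \<Longrightarrow> \<delta> \<le> update_matrix a i j"
    and S: "\<And>i. \<delta> \<le> surplus_matrix b i i" "\<And>i j. (j, i) \<in> E \<Longrightarrow> \<delta> \<le> surplus_matrix b i j"
    using valid_weights_lower_bound by blast
  have paths: "(j, i) \<in> E\<^sup>*" "(j, i) \<in> (E\<inverse>)\<^sup>*" for i j
    using assms by (simp_all add: strongly_connected_def rtrancl_converse)
  note stochastic = valid_weights_stochastic
  show "\<exists>K \<eta>. 0 < K \<and> 0 < \<eta> \<and> (\<forall>i j. \<eta> \<le> mat_power (update_matrix a) K i j)"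
    by (rule mat_power_uniformly_positive[OF row_stochasticD(1)[OF stochastic(1)] \<open>0 < \<delta>\<close> P paths(1)])
  show "\<exists>K \<eta>. 0 < K \<and> 0 < \<eta> \<and> (\<forall>i j. \<eta> \<le> mat_power (surplus_matrix b) K i j)"
    by (rule mat_power_uniformly_positive[OF col_stochasticD(1)[OF stochastic(2)] \<open>0 < \<delta>\<close> S paths(1)])
  show "\<exists>K \<eta>. 0 < K \<and> 0 < \<eta> \<and> (\<forall>i j. \<eta> \<le> mat_power (\<lambda>i j. update_matrix a j i) K i j)"
    by (rule mat_power_uniformly_positive[where R = "E\<inverse>"])
      (use row_stochasticD(1)[OF stochastic(1)] \<open>0 < \<delta>\<close> P paths(2) in auto)
qed

lemma surplus_consensus_if_strongly_connected:
  assumes "strongly_connected E"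
  shows "\<exists>\<pi> w K1 K2 \<eta>1 \<eta>2. surplus_consensus (update_matrix a) (surplus_matrix b) \<pi> w K1 K2 \<eta>1 \<eta>2"
proof -
  note stochastic = valid_weights_stochastic
  obtain K1 \<eta>1 where K1: "0 < K1" "0 < \<eta>1" "\<And>i j. \<eta>1 \<le> mat_power (update_matrix a) K1 i j"
    using primitive_if_strongly_connected(1)[OF assms] by blast
  obtain K2 \<eta>2 where K2: "0 < K2" "0 < \<eta>2" "\<And>i j. \<eta>2 \<le> mat_power (surplus_matrix b) K2 i j"
    using primitive_if_strongly_connected(2)[OF assms] by blast
  obtain K3 \<eta>3 where K3: "0 < K3" "0 < \<eta>3" "\<And>i j. \<eta>3 \<le> mat_power (\<lambda>i j. update_matrix a j i) K3 i j"
    using primitive_if_strongly_connected(3)[OF assms] by blast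
  obtain w where w: "prob_vector w" "\<And>i. \<eta>2 \<le> w i" "matvec (surplus_matrix b) w = w"
    using col_stochastic_fixed_vector[OF stochastic(2) K2] by blast
  obtain \<pi> where \<pi>: "prob_vector \<pi>" "\<And>i. \<eta>3 \<le> \<pi> i" "matvec (\<lambda>i j. update_matrix a j i) \<pi> = \<pi>"
    using col_stochastic_fixed_vector[OF stochastic(1)[folded col_stochastic_transpose] K3] by blast
  have "0 < wavg \<pi> w"
    unfolding wavg_def using \<pi>(2) w(2) K2(2) K3(2)
    by (intro sum_pos) (auto intro: mult_pos_pos order.strict_trans2)
  then show ?thesis
    using stochastic K1 K2 \<pi> w by (intro exI) (unfold_locales; blast)
qed

lemma average_consensus_if_strongly_connected:
  assumes "strongly_connected E"
  shows "\<exists>\<epsilon>bar > 0. \<forall>\<epsilon>. 0 < \<epsilon> \<and> \<epsilon> < \<epsilon>bar \<longrightarrow> average_consensus a b \<epsilon>"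
proof -
  obtain \<pi> w K1 K2 \<eta>1 \<eta>2 where "surplus_consensus (update_matrix a) (surplus_matrix b) \<pi> w K1 K2 \<eta>1 \<eta>2"
    using surplus_consensus_if_strongly_connected[OF assms] by blast
  then interpret surplus_consensus "update_matrix a" "surplus_matrix b" \<pi> w K1 K2 \<eta>1 \<eta>2 .
  have "average_consensus a b \<epsilon>" if "0 < \<epsilon>" "\<epsilon> < eps_bar" for \<epsilon>
    unfolding average_consensus_iff
  proof (intro allI)
    fix x0 :: "real^'n" and i
    define x where "x = (\<lambda>k i. traj (Mmat a b \<epsilon>) (stack x0 0) k $ Inl i)"
    define s where "s = (\<lambda>k i. traj (Mmat a b \<epsilon>) (stack x0 0) k $ Inr i)"
    note traj = traj_Mmat[OF x_def s_def]
    have "x (Suc k) = x_step \<epsilon> (x k) (s k)" "s (Suc k) = s_step \<epsilon> (x k) (s k)" for k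
      by (simp_all add: traj x_step_def[abs_def] s_step_def[abs_def])
    from tendsto_consensus[OF that traj(2) this, of i]
    have "(\<lambda>k. x k i) \<longlonglongrightarrow> (\<Sum>j\<in>UNIV. x0 $ j) / real CARD('n)" "(\<lambda>k. s k i) \<longlonglongrightarrow> 0"
      unfolding traj(1) by simp_all
    then show "(\<lambda>k. traj (Mmat a b \<epsilon>) (stack x0 0) k $ Inl i) \<longlonglongrightarrow> (\<Sum>j\<in>UNIV. x0 $ j) / real CARD('n)
        \<and> (\<lambda>k. traj (Mmat a b \<epsilon>) (stack x0 0) k $ Inr i) \<longlonglongrightarrow> 0"
      by (simp add: x_def s_def)
  qed
  then show ?thesis
    using eps_bar_pos by blast
qed

lemma traj_vanishes_on_closed_set:
  assumes closed: "\<And>i j. (j, i) \<in> E \<Longrightarrow> i \<in> C \<Longrightarrow> j \<in> C" and zero: "\<And>i. i \<in> C \<Longrightarrow> x0 $ i = 0"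
    and x: "x = (\<lambda>k i. traj (Mmat a b \<epsilon>) (stack x0 0) k $ Inl i)"
    and s: "s = (\<lambda>k i. traj (Mmat a b \<epsilon>) (stack x0 0) k $ Inr i)"
  shows "i \<in> C \<Longrightarrow> x k i = 0 \<and> s k i = 0"
proof (induction k arbitrary: i)
  case 0
  then show ?case using zero traj_Mmat[OF x s] by simp
next
  case (Suc k)
  have supported: "j \<in> C" if "i \<noteq> j \<Longrightarrow> (j, i) \<in> E" for j
    using that closed[of j i] Suc.prems by blast
  have "matvec (update_matrix a) (x k) i = 0" "matvec (surplus_matrix b) (s k) i = 0"
    using Suc.IH supported valid_weights_off_graph by (metis matvec_eq_zeroI)+
  then show ?case
    using Suc traj_Mmat(3,4)[OF x s, of k] by simp
qed

text \<open>If some node cannot reach \<open>j\<close>, then the set of nodes that can reach \<open>j\<close> receives no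
  information from outside; starting from zero on this set and one elsewhere, the state of \<open>j\<close>
  stays zero while the average is positive.\<close>

lemma not_average_consensus_if_not_strongly_connected:
  assumes "\<not> strongly_connected E"
  shows "\<not> average_consensus a b \<epsilon>"
proof
  assume consensus: "average_consensus a b \<epsilon>"
  obtain i0 j0 where "(i0, j0) \<notin> E\<^sup>*"
    using assms by (auto simp: strongly_connected_def)
  define C where "C = {i. (i, j0) \<in> E\<^sup>*}"
  define x0 :: "real^'n" where "x0 = (\<chi> i. if i \<in> C then 0 else 1)"
  have closed: "j \<in> C" if "(j, i) \<in> E" "i \<in> C" for i j
    using that by (auto simp: C_def intro: converse_rtrancl_into_rtrancl)
  define x where "x = (\<lambda>k i. traj (Mmat a b \<epsilon>) (stack x0 0) k $ Inl i)"
  define s where "s = (\<lambda>k i. traj (Mmat a b \<epsilon>) (stack x0 0) k $ Inr i)"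
  have "x k j0 = 0" for k
    using traj_vanishes_on_closed_set[OF closed _ x_def s_def] by (simp add: C_def x0_def)
  then have "traj (Mmat a b \<epsilon>) (stack x0 0) k $ Inl j0 = 0" for k
    by (simp add: x_def)
  moreover have "(\<lambda>k. traj (Mmat a b \<epsilon>) (stack x0 0) k $ Inl j0) \<longlonglongrightarrow> (\<Sum>j\<in>UNIV. x0 $ j) / real CARD('n)"
    using consensus unfolding average_consensus_iff by blast
  ultimately have "(\<Sum>j\<in>UNIV. x0 $ j) = 0"
    by (simp add: LIMSEQ_const_iff)
  moreover have "x0 $ i0 \<le> (\<Sum>j\<in>UNIV. x0 $ j)"
    by (rule member_le_sum) (auto simp: x0_def)
  ultimately show False
    using \<open>(i0, j0) \<notin> E\<^sup>*\<close> by (simp add: x0_def C_def)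
qed

end

theorem theorem1:
  fixes E :: "('n::finite \<times> 'n) set"
    and a b :: "'n \<Rightarrow> 'n \<Rightarrow> real"
  assumes "CARD('n) > 1"
    and "\<forall>i. (i, i) \<notin> E"
    and "valid_weights E a b"
  shows "strongly_connected E \<longleftrightarrow>
    (\<exists>\<epsilon>bar > 0. \<forall>\<epsilon>. 0 < \<epsilon> \<and> \<epsilon> < \<epsilon>bar \<longrightarrow> average_consensus a b \<epsilon>)"
proof
  assume "strongly_connected E"
  then show "\<exists>\<epsilon>bar > 0. \<forall>\<epsilon>. 0 < \<epsilon> \<and> \<epsilon> < \<epsilon>bar \<longrightarrow> average_consensus a b \<epsilon>"
    by (rule average_consensus_if_strongly_connected[OF assms(3)])
next
  assume "\<exists>\<epsilon>bar > 0. \<forall>\<epsilon>. 0 < \<epsilon> \<and> \<epsilon> < \<epsilon>bar \<longrightarrow> average_consensus a b \<epsilon>"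
  then obtain \<epsilon>bar where "0 < \<epsilon>bar" "\<And>\<epsilon>. 0 < \<epsilon> \<and> \<epsilon> < \<epsilon>bar \<Longrightarrow> average_consensus a b \<epsilon>"
    by blast
  then have "average_consensus a b (\<epsilon>bar / 2)"
    by simp
  then show "strongly_connected E"
    using not_average_consensus_if_not_strongly_connected[OF assms(3)] by blast
qed

end
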